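(* Let $\Bbbk$ be a field of characteristic $0$, let $\alpha,\beta\in\Bbbk$ with $\beta\neq0$, and let $A=A(\alpha,\beta)=\Bbbk\langle x,y\rangle/(x^2y-\alpha xyx-\beta yx^2,\ xy^2-\alpha yxy-\beta y^2x)$ be a noetherian PI down-up algebra. Then every $\phi\in\mathrm{Oz}(A)$ satisfies $\phi(x)\in\Bbbk x$ and $\phi(y)\in\Bbbk y$. As a consequence, $\mathrm{Oz}(A)$ is abelian.
   Context: $\mathrm{Oz}(A)$ is the group of algebra automorphisms of $A$ fixing the center of $A$ pointwise. $A(\alpha,\beta)$ is PI iff both roots of $w^2-\alpha w-\beta=0$ are roots of unity. *)

theory Defs
  imports "HOL-Library.Poly_Mapping"
begin

text \<open>Noncommutative polynomials: finitely supported functions from words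
  (lists of variable indices) to the field.  Multiplication is the
  concatenation convolution.\<close>

type_synonym 'k ncpoly = "nat list \<Rightarrow>\<^sub>0 'k"

definition nc_mult :: "'k::comm_ring_1 ncpoly \<Rightarrow> 'k ncpoly \<Rightarrow> 'k ncpoly" where
  "nc_mult p q = (\<Sum>u\<in>Poly_Mapping.keys p. \<Sum>v\<in>Poly_Mapping.keys q.
       Poly_Mapping.single (u @ v) (Poly_Mapping.lookup p u * Poly_Mapping.lookup q v))"

definition nc_one :: "'k::comm_ring_1 ncpoly" where
  "nc_one = Poly_Mapping.single [] 1"

definition nc_smul :: "'k::comm_ring_1 \<Rightarrow> 'k ncpoly \<Rightarrow> 'k ncpoly" where
  "nc_smul c p = nc_mult (Poly_Mapping.single [] c) p"

definition nc_var :: "nat \<Rightarrow> 'k::comm_ring_1 ncpoly" where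
  "nc_var i = Poly_Mapping.single [i] 1"

definition nc_subst :: "(nat \<Rightarrow> 'k::comm_ring_1 ncpoly) \<Rightarrow> 'k ncpoly \<Rightarrow> 'k ncpoly" where
  "nc_subst s f = (\<Sum>w\<in>Poly_Mapping.keys f. nc_smul (Poly_Mapping.lookup f w)
       (foldr (\<lambda>i acc. nc_mult (s i) acc) w nc_one))"

section \<open>The down-up algebra A(alpha, beta) = k<x,y>/(relations), x = X_0, y = X_1\<close>

definition du_rel1 :: "'k::comm_ring_1 \<Rightarrow> 'k \<Rightarrow> 'k ncpoly" where
  "du_rel1 \<alpha> \<beta> = Poly_Mapping.single [0,0,1] 1 - Poly_Mapping.single [0,1,0] \<alpha>
                  - Poly_Mapping.single [1,0,0] \<beta>"   (* x^2 y - alpha xyx - beta y x^2 *)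

definition du_rel2 :: "'k::comm_ring_1 \<Rightarrow> 'k \<Rightarrow> 'k ncpoly" where
  "du_rel2 \<alpha> \<beta> = Poly_Mapping.single [0,1,1] 1 - Poly_Mapping.single [1,0,1] \<alpha>
                  - Poly_Mapping.single [1,1,0] \<beta>"   (* x y^2 - alpha yxy - beta y^2 x *)

text \<open>The two-sided ideal generated by the two relations (inside k<x,y> sitting in
  the free algebra on countably many variables; x, y are X_0, X_1 and only words
  in 0,1 are relevant).\<close>
inductive_set du_ideal :: "'k::comm_ring_1 \<Rightarrow> 'k \<Rightarrow> 'k ncpoly set" for \<alpha> \<beta> where
  zero: "0 \<in> du_ideal \<alpha> \<beta>"
| add: "p \<in> du_ideal \<alpha> \<beta> \<Longrightarrow> q \<in> du_ideal \<alpha> \<beta> \<Longrightarrow> p + q \<in> du_ideal \<alpha> \<beta>"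
| gen: "r \<in> {du_rel1 \<alpha> \<beta>, du_rel2 \<alpha> \<beta>} \<Longrightarrow> nc_mult (nc_mult a r) b \<in> du_ideal \<alpha> \<beta>"

definition du_words :: "'k::comm_ring_1 ncpoly set" where
  "du_words = {p. \<forall>w\<in>Poly_Mapping.keys p. set w \<subseteq> {0,1}}"

text \<open>Elements of A are cosets p + I for p in k<x,y>.\<close>
definition du_class :: "'k::comm_ring_1 \<Rightarrow> 'k \<Rightarrow> 'k ncpoly \<Rightarrow> 'k ncpoly set" where
  "du_class \<alpha> \<beta> p = {q \<in> du_words. q - p \<in> du_ideal \<alpha> \<beta>}"

definition du_carrier :: "'k::comm_ring_1 \<Rightarrow> 'k \<Rightarrow> 'k ncpoly set set" where
  "du_carrier \<alpha> \<beta> = du_class \<alpha> \<beta> ` du_words"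

definition du_add :: "'k::comm_ring_1 \<Rightarrow> 'k \<Rightarrow> 'k ncpoly set \<Rightarrow> 'k ncpoly set \<Rightarrow> 'k ncpoly set" where
  "du_add \<alpha> \<beta> P Q = du_class \<alpha> \<beta> ((SOME p. p \<in> P) + (SOME q. q \<in> Q))"

definition du_mult :: "'k::comm_ring_1 \<Rightarrow> 'k \<Rightarrow> 'k ncpoly set \<Rightarrow> 'k ncpoly set \<Rightarrow> 'k ncpoly set" where
  "du_mult \<alpha> \<beta> P Q = du_class \<alpha> \<beta> (nc_mult (SOME p. p \<in> P) (SOME q. q \<in> Q))"

definition du_smul :: "'k::comm_ring_1 \<Rightarrow> 'k \<Rightarrow> 'k \<Rightarrow> 'k ncpoly set \<Rightarrow> 'k ncpoly set" where
  "du_smul \<alpha> \<beta> c P = du_class \<alpha> \<beta> (nc_smul c (SOME p. p \<in> P))"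

definition du_zero :: "'k::comm_ring_1 \<Rightarrow> 'k \<Rightarrow> 'k ncpoly set" where
  "du_zero \<alpha> \<beta> = du_class \<alpha> \<beta> 0"

definition du_one :: "'k::comm_ring_1 \<Rightarrow> 'k \<Rightarrow> 'k ncpoly set" where
  "du_one \<alpha> \<beta> = du_class \<alpha> \<beta> nc_one"

definition du_x :: "'k::comm_ring_1 \<Rightarrow> 'k \<Rightarrow> 'k ncpoly set" where
  "du_x \<alpha> \<beta> = du_class \<alpha> \<beta> (nc_var 0)"

definition du_y :: "'k::comm_ring_1 \<Rightarrow> 'k \<Rightarrow> 'k ncpoly set" where
  "du_y \<alpha> \<beta> = du_class \<alpha> \<beta> (nc_var 1)"

definition du_is_aut :: "'k::comm_ring_1 \<Rightarrow> 'k \<Rightarrow> ('k ncpoly set \<Rightarrow> 'k ncpoly set) \<Rightarrow> bool" where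
  "du_is_aut \<alpha> \<beta> \<phi> \<longleftrightarrow>
     bij_betw \<phi> (du_carrier \<alpha> \<beta>) (du_carrier \<alpha> \<beta>)
   \<and> (\<forall>P\<in>du_carrier \<alpha> \<beta>. \<forall>Q\<in>du_carrier \<alpha> \<beta>.
        \<phi> (du_add \<alpha> \<beta> P Q) = du_add \<alpha> \<beta> (\<phi> P) (\<phi> Q)
      \<and> \<phi> (du_mult \<alpha> \<beta> P Q) = du_mult \<alpha> \<beta> (\<phi> P) (\<phi> Q))
   \<and> (\<forall>c. \<forall>P\<in>du_carrier \<alpha> \<beta>. \<phi> (du_smul \<alpha> \<beta> c P) = du_smul \<alpha> \<beta> c (\<phi> P))
   \<and> \<phi> (du_one \<alpha> \<beta>) = du_one \<alpha> \<beta>"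

definition du_center :: "'k::comm_ring_1 \<Rightarrow> 'k \<Rightarrow> 'k ncpoly set set" where
  "du_center \<alpha> \<beta> = {Z \<in> du_carrier \<alpha> \<beta>.
      \<forall>P\<in>du_carrier \<alpha> \<beta>. du_mult \<alpha> \<beta> Z P = du_mult \<alpha> \<beta> P Z}"

definition du_Oz :: "'k::comm_ring_1 \<Rightarrow> 'k \<Rightarrow> ('k ncpoly set \<Rightarrow> 'k ncpoly set) set" where
  "du_Oz \<alpha> \<beta> = {\<phi>. du_is_aut \<alpha> \<beta> \<phi> \<and> (\<forall>Z\<in>du_center \<alpha> \<beta>. \<phi> Z = Z)}"

definition du_left_ideal :: "'k::comm_ring_1 \<Rightarrow> 'k \<Rightarrow> 'k ncpoly set set \<Rightarrow> bool" where
  "du_left_ideal \<alpha> \<beta> L \<longleftrightarrow> L \<subseteq> du_carrier \<alpha> \<beta> \<and> du_zero \<alpha> \<beta> \<in> L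
     \<and> (\<forall>P\<in>L. \<forall>Q\<in>L. du_add \<alpha> \<beta> P Q \<in> L)
     \<and> (\<forall>R\<in>du_carrier \<alpha> \<beta>. \<forall>P\<in>L. du_mult \<alpha> \<beta> R P \<in> L)"

definition du_right_ideal :: "'k::comm_ring_1 \<Rightarrow> 'k \<Rightarrow> 'k ncpoly set set \<Rightarrow> bool" where
  "du_right_ideal \<alpha> \<beta> L \<longleftrightarrow> L \<subseteq> du_carrier \<alpha> \<beta> \<and> du_zero \<alpha> \<beta> \<in> L
     \<and> (\<forall>P\<in>L. \<forall>Q\<in>L. du_add \<alpha> \<beta> P Q \<in> L)
     \<and> (\<forall>R\<in>du_carrier \<alpha> \<beta>. \<forall>P\<in>L. du_mult \<alpha> \<beta> P R \<in> L)"

definition du_noetherian :: "'k::comm_ring_1 \<Rightarrow> 'k \<Rightarrow> bool" where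
  "du_noetherian \<alpha> \<beta> \<longleftrightarrow>
     (\<forall>L :: nat \<Rightarrow> 'k ncpoly set set. (\<forall>n. du_left_ideal \<alpha> \<beta> (L n)) \<and> mono L
        \<longrightarrow> (\<exists>N. \<forall>n\<ge>N. L n = L N))
   \<and> (\<forall>L :: nat \<Rightarrow> 'k ncpoly set set. (\<forall>n. du_right_ideal \<alpha> \<beta> (L n)) \<and> mono L
        \<longrightarrow> (\<exists>N. \<forall>n\<ge>N. L n = L N))"

definition du_PI :: "'k::comm_ring_1 \<Rightarrow> 'k \<Rightarrow> bool" where
  "du_PI \<alpha> \<beta> \<longleftrightarrow> (\<exists>f :: 'k ncpoly. f \<noteq> 0 \<and>
      (\<forall>s. (\<forall>i. s i \<in> du_words) \<longrightarrow> nc_subst s f \<in> du_ideal \<alpha> \<beta>))"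

end

(*
  Let sigma be the automorphism of k[u, v] with sigma v = u and sigma u = alpha u + beta v.
  A acts faithfully on sequences g : Z -> k[u, v] by
    (x g) n = sigma (g (n - 1)),    (y g) n = v * sigma^-1 (g (n + 1)),
  so that yx and xy act as multiplication by v and u; the defining relations then reduce to
  sigma u = alpha u + beta v.  Faithfulness is checked on the normal words y^i (xy)^j x^k,
  which span A and whose images of the unit sequence at 0 are linearly independent.

  If A satisfies a polynomial identity, sigma^N v = v for some N >= 1: otherwise, substituting
  t_i x for the variables, where t_i acts as multiplication by an element of the monoid generated
  by 1 + v, turns the identity into a linear relation among pairwise distinct characters of that
  monoid, contradicting Dedekind's lemma.  Then x^N and y^N are central, hence fixed by every
  phi in Oz(A), so phi(x)^N = x^N and phi(y)^N = y^N.  Comparing the top and bottom Z-degrees of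
  these powers shows that phi(x) acts as r sigma and phi(y) as r' sigma^-1; the N-th powers then
  force r and r'/v to be units of k[u, v], i.e. scalars.  Automorphisms that rescale both
  generators commute, since an endomorphism of A is determined by its values on x and y.
*)
theory Submission
  imports Defs "HOL-Computational_Algebra.Polynomial"
begin

section \<open>Ring homomorphisms and substitution in \<open>k[u, v]\<close>\<close>

locale comm_ring_hom =
  fixes hom :: "'a::comm_ring_1 \<Rightarrow> 'b::comm_ring_1"
  assumes hom_add [simp]: "hom (a + b) = hom a + hom b"
    and hom_mult [simp]: "hom (a * b) = hom a * hom b"
    and hom_one [simp]: "hom 1 = 1"
begin

lemma hom_zero [simp]: "hom 0 = 0"
  using hom_add[of 0 0] by simp

lemma hom_uminus [simp]: "hom (- a) = - hom a"
  using hom_add[of a "- a"] by (simp add: eq_neg_iff_add_eq_0 add.commute)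

lemma hom_sum [simp]: "hom (sum f S) = (\<Sum>x\<in>S. hom (f x))"
  by (induction S rule: infinite_finite_induct) simp_all

lemma hom_prod [simp]: "hom (prod f S) = (\<Prod>x\<in>S. hom (f x))"
  by (induction S rule: infinite_finite_induct) simp_all

end

lemma comm_ring_hom_comp:
  "comm_ring_hom f \<Longrightarrow> comm_ring_hom g \<Longrightarrow> comm_ring_hom (\<lambda>x. f (g x))"
  by (simp add: comm_ring_hom_def)

lemma comm_ring_hom_funpow:
  fixes f :: "'a::comm_ring_1 \<Rightarrow> 'a"
  shows "comm_ring_hom f \<Longrightarrow> comm_ring_hom (f ^^ n)"
  by (induction n) (simp_all add: comm_ring_hom_def)

lemma comm_ring_hom_map_poly:
  assumes "comm_ring_hom f"
  shows "comm_ring_hom (map_poly f)"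
proof -
  interpret comm_ring_hom f by fact
  show ?thesis
  proof
    fix p q
    show "map_poly f (p + q) = map_poly f p + map_poly f q"
      by (rule poly_eqI) (simp add: coeff_map_poly)
    show "map_poly f (p * q) = map_poly f p * map_poly f q"
      by (rule poly_eqI) (simp add: coeff_map_poly coeff_mult)
  qed simp
qed

lemma comm_ring_hom_poly: "comm_ring_hom (\<lambda>p. poly p x)"
  by unfold_locales simp_all

lemma comm_ring_hom_const_poly: "comm_ring_hom (\<lambda>c. [:c:])"
  by unfold_locales (simp_all add: one_pCons)

text \<open>\<open>'k poly poly\<close> serves as \<open>k[u, v]\<close>, with \<open>u\<close> the inner and \<open>v\<close> the outer variable.\<close>

definition subst_poly :: "('k::comm_ring_1 \<Rightarrow> 'a::comm_ring_1) \<Rightarrow> 'a \<Rightarrow> 'k poly \<Rightarrow> 'a" where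
  "subst_poly C A c = poly (map_poly C c) A"

definition subst_bipoly ::
    "('k::comm_ring_1 \<Rightarrow> 'a::comm_ring_1) \<Rightarrow> 'a \<Rightarrow> 'a \<Rightarrow> 'k poly poly \<Rightarrow> 'a" where
  "subst_bipoly C A B f = poly (map_poly (subst_poly C A) f) B"

lemma comm_ring_hom_subst_poly: "comm_ring_hom C \<Longrightarrow> comm_ring_hom (subst_poly C A)"
  unfolding subst_poly_def
  by (intro comm_ring_hom_comp[of "\<lambda>p. poly p A", OF comm_ring_hom_poly] comm_ring_hom_map_poly)

lemma comm_ring_hom_subst_bipoly: "comm_ring_hom C \<Longrightarrow> comm_ring_hom (subst_bipoly C A B)"
  unfolding subst_bipoly_def
  by (intro comm_ring_hom_comp[of "\<lambda>p. poly p B", OF comm_ring_hom_poly]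
      comm_ring_hom_map_poly comm_ring_hom_subst_poly)

lemma subst_poly_pCons:
  "comm_ring_hom C \<Longrightarrow> subst_poly C A (pCons a c) = C a + A * subst_poly C A c"
  by (simp add: subst_poly_def map_poly_pCons comm_ring_hom.hom_zero)

lemma subst_bipoly_pCons:
  "comm_ring_hom C \<Longrightarrow> subst_bipoly C A B (pCons c f) = subst_poly C A c + B * subst_bipoly C A B f"
  by (simp add: subst_bipoly_def map_poly_pCons comm_ring_hom.hom_zero comm_ring_hom_subst_poly)

lemma hom_subst_poly:
  assumes "comm_ring_hom C" "comm_ring_hom h"
  shows "h (subst_poly C A c) = subst_poly (\<lambda>a. h (C a)) (h A) c"
proof (induction c)
  case 0
  show ?case using assms(2) by (simp add: subst_poly_def comm_ring_hom.hom_zero)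
next
  case (pCons a c)
  then show ?case using assms comm_ring_hom_comp[OF assms(2,1)]
    by (simp add: subst_poly_pCons comm_ring_hom.hom_add comm_ring_hom.hom_mult)
qed

lemma hom_subst_bipoly:
  assumes "comm_ring_hom C" "comm_ring_hom h"
  shows "h (subst_bipoly C A B f) = subst_bipoly (\<lambda>a. h (C a)) (h A) (h B) f"
proof (induction f)
  case 0
  show ?case using assms(2) by (simp add: subst_bipoly_def comm_ring_hom.hom_zero)
next
  case (pCons c f)
  then show ?case using assms comm_ring_hom_comp[OF assms(2,1)]
    by (simp add: subst_bipoly_pCons hom_subst_poly comm_ring_hom.hom_add comm_ring_hom.hom_mult)
qed

definition const_uv :: "'k::comm_ring_1 \<Rightarrow> 'k poly poly" where
  "const_uv c = [:[:c:]:]"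

definition var_u :: "'k::comm_ring_1 poly poly" where
  "var_u = [:[:0, 1:]:]"

definition var_v :: "'k::comm_ring_1 poly poly" where
  "var_v = [:0, 1:]"

definition lin_uv :: "'k::comm_ring_1 \<Rightarrow> 'k \<Rightarrow> 'k poly poly" where
  "lin_uv p q = const_uv p * var_u + const_uv q * var_v"

interpretation const_uv: comm_ring_hom const_uv
  by unfold_locales (simp_all add: const_uv_def one_pCons)

lemma const_uv_eq_0_iff [simp]: "const_uv a = 0 \<longleftrightarrow> a = 0"
  by (simp add: const_uv_def)

lemma var_v_nonzero [simp]: "var_v \<noteq> 0"
  by (simp add: var_v_def)

lemma lin_uv_eq_iff: "lin_uv p q = lin_uv p' q' \<longleftrightarrow> p = p' \<and> q = q'"
  by (simp add: lin_uv_def const_uv_def var_u_def var_v_def)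

lemma lin_uv_0_1: "lin_uv 0 1 = var_v"
  by (simp add: lin_uv_def)

lemma subst_bipoly_const_uv: "comm_ring_hom C \<Longrightarrow> subst_bipoly C A B (const_uv c) = C c"
  by (simp add: const_uv_def subst_bipoly_def subst_poly_def map_poly_pCons
      comm_ring_hom.hom_zero comm_ring_hom_subst_poly)

lemma subst_bipoly_var_u: "comm_ring_hom C \<Longrightarrow> subst_bipoly C A B var_u = A"
  by (simp add: var_u_def subst_bipoly_def subst_poly_def map_poly_pCons
      comm_ring_hom.hom_zero comm_ring_hom.hom_one comm_ring_hom_subst_poly)

lemma subst_bipoly_var_v: "comm_ring_hom C \<Longrightarrow> subst_bipoly C A B var_v = B"
  by (simp add: var_v_def subst_bipoly_def map_poly_pCons comm_ring_hom.hom_zero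
      comm_ring_hom.hom_one comm_ring_hom_subst_poly)

lemma subst_bipoly_lin_uv:
  "comm_ring_hom C \<Longrightarrow> subst_bipoly C A B (lin_uv p q) = C p * A + C q * B"
  using comm_ring_hom_subst_bipoly[of C A B]
  by (simp add: lin_uv_def comm_ring_hom.hom_add comm_ring_hom.hom_mult subst_bipoly_const_uv
      subst_bipoly_var_u subst_bipoly_var_v)

lemma subst_bipoly_vars: "subst_bipoly const_uv var_u var_v f = f"
proof -
  have inner: "subst_poly const_uv var_u c = [:c:]" for c :: "'a::comm_ring_1 poly"
  proof (induction c)
    case (pCons a c)
    have "const_uv a + var_u * [:c:] = [:pCons a c:]"
      by (simp add: const_uv_def var_u_def)
    then show ?case using pCons.IH by (simp add: subst_poly_pCons const_uv.comm_ring_hom_axioms)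
  qed (simp add: subst_poly_def)
  show ?thesis
    by (induction f) (simp_all add: subst_bipoly_def map_poly_pCons inner var_v_def
        subst_bipoly_pCons[OF const_uv.comm_ring_hom_axioms])
qed


section \<open>The free algebra and the normal words\<close>

lemma nc_mult_eq_sum_supersets:
  assumes "finite U" "finite V" "Poly_Mapping.keys p \<subseteq> U" "Poly_Mapping.keys q \<subseteq> V"
  shows "nc_mult p q = (\<Sum>u\<in>U. \<Sum>v\<in>V.
           Poly_Mapping.single (u @ v) (Poly_Mapping.lookup p u * Poly_Mapping.lookup q v))"
proof -
  have "nc_mult p q = (\<Sum>u\<in>U. \<Sum>v\<in>Poly_Mapping.keys q.
          Poly_Mapping.single (u @ v) (Poly_Mapping.lookup p u * Poly_Mapping.lookup q v))"
    unfolding nc_mult_def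
    by (rule sum.mono_neutral_left) (use assms in \<open>auto simp: in_keys_iff\<close>)
  also have "\<dots> = (\<Sum>u\<in>U. \<Sum>v\<in>V.
          Poly_Mapping.single (u @ v) (Poly_Mapping.lookup p u * Poly_Mapping.lookup q v))"
    by (intro sum.cong refl sum.mono_neutral_left) (use assms in \<open>auto simp: in_keys_iff\<close>)
  finally show ?thesis .
qed

lemma nc_mult_single:
  "nc_mult (Poly_Mapping.single u a) (Poly_Mapping.single v b) = Poly_Mapping.single (u @ v) (a * b)"
  by (subst nc_mult_eq_sum_supersets[of "{u}" "{v}"]) auto

lemma nc_mult_add_left: "nc_mult (p + p') q = nc_mult p q + nc_mult p' q"
proof -
  let ?U = "Poly_Mapping.keys p \<union> Poly_Mapping.keys p'" and ?V = "Poly_Mapping.keys q"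
  have "Poly_Mapping.keys (p + p') \<subseteq> ?U" by (rule keys_add)
  then show ?thesis
    by (simp add: nc_mult_eq_sum_supersets[of ?U ?V] lookup_add distrib_right single_add sum.distrib)
qed

lemma nc_mult_add_right: "nc_mult p (q + q') = nc_mult p q + nc_mult p q'"
proof -
  let ?U = "Poly_Mapping.keys p" and ?V = "Poly_Mapping.keys q \<union> Poly_Mapping.keys q'"
  have "Poly_Mapping.keys (q + q') \<subseteq> ?V" by (rule keys_add)
  then show ?thesis
    by (simp add: nc_mult_eq_sum_supersets[of ?U ?V] lookup_add distrib_left single_add sum.distrib)
qed

lemma nc_mult_zero_left [simp]: "nc_mult 0 q = 0"
  by (simp add: nc_mult_def)

lemma nc_mult_uminus_left: "nc_mult (- p) q = - nc_mult p q"
  using nc_mult_add_left[of p "- p" q] by (simp add: eq_neg_iff_add_eq_0 add.commute)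

lemma nc_mult_diff_left: "nc_mult (p - p') q = nc_mult p q - nc_mult p' q"
  using nc_mult_add_left[of p "- p'" q] by (simp add: nc_mult_uminus_left)

lemma nc_mult_diff_right: "nc_mult p (q - q') = nc_mult p q - nc_mult p q'"
  using nc_mult_add_right[of p "q - q'" q'] by (simp add: eq_diff_eq)

lemma poly_mapping_eq_sum_single:
  "p = (\<Sum>w\<in>Poly_Mapping.keys p. Poly_Mapping.single w (Poly_Mapping.lookup p w))"
  by (rule poly_mapping_eqI) (simp add: lookup_sum lookup_single when_def in_keys_iff)

lemma du_words_add: "p \<in> du_words \<Longrightarrow> q \<in> du_words \<Longrightarrow> p + q \<in> du_words"
  unfolding du_words_def using keys_add[of p q] by blast

lemma du_words_diff: "p \<in> du_words \<Longrightarrow> q \<in> du_words \<Longrightarrow> p - q \<in> du_words"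
  unfolding du_words_def using keys_diff[of p q] by blast

lemma du_words_zero: "0 \<in> du_words"
  by (simp add: du_words_def)

lemma du_words_single: "set w \<subseteq> {0, 1} \<Longrightarrow> Poly_Mapping.single w c \<in> du_words"
  by (simp add: du_words_def)

lemma du_words_sum: "(\<And>i. i \<in> S \<Longrightarrow> p i \<in> du_words) \<Longrightarrow> sum p S \<in> du_words"
  by (induction S rule: infinite_finite_induct) (simp_all add: du_words_zero du_words_add)

lemma du_words_mult: "p \<in> du_words \<Longrightarrow> q \<in> du_words \<Longrightarrow> nc_mult p q \<in> du_words"
  unfolding nc_mult_def by (intro du_words_sum) (auto simp: du_words_def)

lemma du_words_nc_one: "nc_one \<in> du_words"
  by (simp add: nc_one_def du_words_def)

lemma du_words_smul: "p \<in> du_words \<Longrightarrow> nc_smul c p \<in> du_words"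
  unfolding nc_smul_def by (intro du_words_mult du_words_single) auto

lemma du_words_var: "i \<le> 1 \<Longrightarrow> nc_var i \<in> du_words"
  by (auto simp: nc_var_def du_words_def)

lemma du_words_induct [consumes 1, case_names zero single add]:
  assumes "p \<in> du_words"
    and "Q 0"
    and "\<And>w c. set w \<subseteq> {0, 1} \<Longrightarrow> Q (Poly_Mapping.single w c)"
    and "\<And>p q. p \<in> du_words \<Longrightarrow> q \<in> du_words \<Longrightarrow> Q p \<Longrightarrow> Q q \<Longrightarrow> Q (p + q)"
  shows "Q p"
proof -
  have "Q (\<Sum>w\<in>S. Poly_Mapping.single w (Poly_Mapping.lookup p w))"
    if "finite S" "S \<subseteq> Poly_Mapping.keys p" for S
    using that
  proof (induction S rule: finite_induct)
    case (insert w S)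
    have letters: "set w' \<subseteq> {0, 1}" if "w' \<in> insert w S" for w'
      using that insert.prems assms(1) by (auto simp: du_words_def)
    have "(\<Sum>w\<in>S. Poly_Mapping.single w (Poly_Mapping.lookup p w)) \<in> du_words"
      using letters by (intro du_words_sum du_words_single) simp
    moreover have "Q (\<Sum>w\<in>S. Poly_Mapping.single w (Poly_Mapping.lookup p w))"
      using insert.IH insert.prems by simp
    ultimately show ?case using insert.hyps letters[of w] by (simp add: assms(3,4) du_words_single)
  qed (simp add: assms(2))
  then show ?thesis by (metis finite_keys order_refl poly_mapping_eq_sum_single)
qed

lemma du_ideal_uminus: "p \<in> du_ideal \<alpha> \<beta> \<Longrightarrow> - p \<in> du_ideal \<alpha> \<beta>"
proof (induction rule: du_ideal.induct)
  case (add p q)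
  then show ?case using du_ideal.add[of "- p" \<alpha> \<beta> "- q"] by (simp add: add.commute)
next
  case (gen r a b)
  then show ?case using du_ideal.gen[of r \<alpha> \<beta> "- a" b] by (simp add: nc_mult_uminus_left)
qed (simp add: du_ideal.zero)

lemma du_ideal_diff: "p \<in> du_ideal \<alpha> \<beta> \<Longrightarrow> q \<in> du_ideal \<alpha> \<beta> \<Longrightarrow> p - q \<in> du_ideal \<alpha> \<beta>"
  using du_ideal.add[of p \<alpha> \<beta> "- q"] du_ideal_uminus[of q \<alpha> \<beta>] by simp

text \<open>The two defining relations, read as rewriting rules \<open>xxy \<rightarrow> \<alpha> xyx + \<beta> yxx\<close> and
  \<open>xyy \<rightarrow> \<alpha> yxy + \<beta> yyx\<close> (with \<open>x = 0\<close>, \<open>y = 1\<close>).\<close>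

definition du_rewrite_rule :: "nat list \<Rightarrow> nat list \<Rightarrow> nat list \<Rightarrow> bool" where
  "du_rewrite_rule m m1 m2 \<longleftrightarrow>
     m = [0,0,1] \<and> m1 = [0,1,0] \<and> m2 = [1,0,0] \<or> m = [0,1,1] \<and> m1 = [1,0,1] \<and> m2 = [1,1,0]"

lemma du_ideal_rewrite_rule:
  assumes "du_rewrite_rule m m1 m2"
  shows "Poly_Mapping.single (p @ m @ q) c - Poly_Mapping.single (p @ m1 @ q) (c * \<alpha>)
           - Poly_Mapping.single (p @ m2 @ q) (c * \<beta>) \<in> du_ideal \<alpha> \<beta>"
proof -
  define r where "r = Poly_Mapping.single m 1 - Poly_Mapping.single m1 \<alpha> - Poly_Mapping.single m2 \<beta>"
  have "r = du_rel1 \<alpha> \<beta> \<or> r = du_rel2 \<alpha> \<beta>"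
    using assms unfolding du_rewrite_rule_def r_def du_rel1_def du_rel2_def by blast
  then have "nc_mult (nc_mult (Poly_Mapping.single p c) r) (Poly_Mapping.single q 1) \<in> du_ideal \<alpha> \<beta>"
    by (intro du_ideal.gen) simp
  then show ?thesis
    by (simp only: r_def nc_mult_diff_right nc_mult_diff_left nc_mult_single append_assoc mult_1_right)
qed

definition nf_word :: "nat \<Rightarrow> nat \<Rightarrow> nat \<Rightarrow> nat list" where
  "nf_word i j k = replicate i 1 @ concat (replicate j [0, 1]) @ replicate k 0"

definition nf_words :: "nat list set" where
  "nf_words = {w. \<exists>i j k. w = nf_word i j k}"

lemma Cons_nf_word_cases:
  assumes "a \<le> 1"
  shows "a # nf_word i j k \<in> nf_words \<or> (\<exists>m m1 m2 q. du_rewrite_rule m m1 m2 \<and> a # nf_word i j k = m @ q)"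
proof -
  consider "a = 1" | "a = 0" "i = 0" "j = 0" | j' where "a = 0" "i = 0" "j = Suc j'"
    | "a = 0" "i = 1" | i' where "a = 0" "i = Suc (Suc i')"
    using assms by (cases i; cases j; cases "i - 1") (auto simp: le_Suc_eq)
  then show ?thesis
  proof cases
    case 1
    then have "a # nf_word i j k = nf_word (Suc i) j k" by (simp add: nf_word_def)
    then show ?thesis by (auto simp: nf_words_def)
  next
    case 2
    then have "a # nf_word i j k = nf_word 0 0 (Suc k)" by (simp add: nf_word_def)
    then show ?thesis by (auto simp: nf_words_def)
  next
    case 3
    then have "du_rewrite_rule [0,0,1] [0,1,0] [1,0,0]
        \<and> a # nf_word i j k = [0,0,1] @ (concat (replicate j' [0,1]) @ replicate k 0)"
      by (simp add: du_rewrite_rule_def nf_word_def)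
    then show ?thesis by blast
  next
    case 4
    then have "a # nf_word i j k = nf_word 0 (Suc j) k" by (simp add: nf_word_def)
    then show ?thesis by (auto simp: nf_words_def)
  next
    case 5
    then have "du_rewrite_rule [0,1,1] [1,0,1] [1,1,0]
        \<and> a # nf_word i j k = [0,1,1] @ (replicate i' 1 @ concat (replicate j [0,1]) @ replicate k 0)"
      by (simp add: du_rewrite_rule_def nf_word_def)
    then show ?thesis by blast
  qed
qed

lemma nf_word_or_reducible:
  "set w \<subseteq> {0, 1} \<Longrightarrow> w \<in> nf_words \<or> (\<exists>p m m1 m2 q. du_rewrite_rule m m1 m2 \<and> w = p @ m @ q)"
proof (induction w)
  case Nil
  have "[] = nf_word 0 0 0" by (simp add: nf_word_def)
  then show ?case by (auto simp: nf_words_def)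
next
  case (Cons a w)
  then have "a \<le> 1" "w \<in> nf_words \<or> (\<exists>p m m1 m2 q. du_rewrite_rule m m1 m2 \<and> w = p @ m @ q)"
    by auto
  then show ?case
  proof (elim disjE exE conjE)
    assume "w \<in> nf_words"
    then obtain i j k where "w = nf_word i j k" by (auto simp: nf_words_def)
    then show ?thesis using Cons_nf_word_cases[OF \<open>a \<le> 1\<close>] by (metis append_Nil)
  next
    fix p m m1 m2 q assume "du_rewrite_rule m m1 m2" "w = p @ m @ q"
    then have "du_rewrite_rule m m1 m2 \<and> a # w = (a # p) @ m @ q" by simp
    then show ?thesis by blast
  qed
qed

text \<open>Each rewriting step strictly decreases this weight, which reads a word as a binary
  number with a digit 1 for each \<open>x\<close>.\<close>

fun word_weight :: "nat list \<Rightarrow> nat" where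
  "word_weight [] = 0"
| "word_weight (a # w) = (if a = 0 then 2 ^ length w else 0) + word_weight w"

lemma word_weight_append: "word_weight (p @ q) = word_weight p * 2 ^ length q + word_weight q"
  by (induction p) (simp_all add: algebra_simps power_add)

lemma word_weight_rewrite_rule:
  assumes "du_rewrite_rule m m1 m2"
  shows "word_weight (p @ m1 @ q) < word_weight (p @ m @ q)"
    and "word_weight (p @ m2 @ q) < word_weight (p @ m @ q)"
  using assms by (auto simp: du_rewrite_rule_def word_weight_append)

definition nf_reducible :: "'k::comm_ring_1 \<Rightarrow> 'k \<Rightarrow> 'k ncpoly \<Rightarrow> bool" where
  "nf_reducible \<alpha> \<beta> p \<longleftrightarrow> (\<exists>q. Poly_Mapping.keys q \<subseteq> nf_words \<and> p - q \<in> du_ideal \<alpha> \<beta>)"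

lemma nf_reducible_add:
  assumes "nf_reducible \<alpha> \<beta> p" "nf_reducible \<alpha> \<beta> p'"
  shows "nf_reducible \<alpha> \<beta> (p + p')"
proof -
  obtain q q' where q: "Poly_Mapping.keys q \<subseteq> nf_words" "p - q \<in> du_ideal \<alpha> \<beta>"
    and q': "Poly_Mapping.keys q' \<subseteq> nf_words" "p' - q' \<in> du_ideal \<alpha> \<beta>"
    using assms by (auto simp: nf_reducible_def)
  have "p + p' - (q + q') = (p - q) + (p' - q')" by simp
  also have "\<dots> \<in> du_ideal \<alpha> \<beta>" using q q' by (intro du_ideal.add)
  finally show ?thesis
    unfolding nf_reducible_def using q q' keys_add[of q q'] by blast
qed

lemma nf_reducible_single:
  "set w \<subseteq> {0, 1} \<Longrightarrow> nf_reducible \<alpha> \<beta> (Poly_Mapping.single w c)"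
proof (induction "word_weight w" arbitrary: w c rule: less_induct)
  case less
  show ?case
  proof (cases "w \<in> nf_words")
    case True
    then show ?thesis unfolding nf_reducible_def
      by (intro exI[of _ "Poly_Mapping.single w c"]) (auto simp: du_ideal.zero)
  next
    case False
    with nf_word_or_reducible[OF less.prems] obtain p m m1 m2 q
      where m: "du_rewrite_rule m m1 m2" and w: "w = p @ m @ q"
      by blast
    let ?w1 = "p @ m1 @ q" and ?w2 = "p @ m2 @ q"
    have "set ?w1 \<subseteq> {0, 1}" "set ?w2 \<subseteq> {0, 1}"
      using less.prems m w by (auto simp: du_rewrite_rule_def)
    then have "nf_reducible \<alpha> \<beta> (Poly_Mapping.single ?w1 (c * \<alpha>) + Poly_Mapping.single ?w2 (c * \<beta>))"
      using word_weight_rewrite_rule[OF m] w by (intro nf_reducible_add less.hyps) simp_all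
    then obtain q' where q': "Poly_Mapping.keys q' \<subseteq> nf_words"
      "Poly_Mapping.single ?w1 (c * \<alpha>) + Poly_Mapping.single ?w2 (c * \<beta>) - q' \<in> du_ideal \<alpha> \<beta>"
      by (auto simp: nf_reducible_def)
    have "Poly_Mapping.single w c - q' =
        (Poly_Mapping.single w c - Poly_Mapping.single ?w1 (c * \<alpha>) - Poly_Mapping.single ?w2 (c * \<beta>))
        + (Poly_Mapping.single ?w1 (c * \<alpha>) + Poly_Mapping.single ?w2 (c * \<beta>) - q')"
      by simp
    also have "\<dots> \<in> du_ideal \<alpha> \<beta>"
      unfolding w by (intro du_ideal.add du_ideal_rewrite_rule[OF m] q'(2))
    finally show ?thesis using q'(1) unfolding nf_reducible_def by blast
  qed
qed

lemma du_words_nf_reducible: "p \<in> du_words \<Longrightarrow> nf_reducible \<alpha> \<beta> p"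
proof (induction rule: du_words_induct)
  case zero
  show ?case unfolding nf_reducible_def by (intro exI[of _ 0]) (simp add: du_ideal.zero)
qed (simp_all add: nf_reducible_add nf_reducible_single)


lemma length_nf_word: "length (nf_word i j k) = i + 2 * j + k"
  by (induction j) (simp_all add: nf_word_def)

lemma nf_word_inject: "nf_word i j k = nf_word i' j' k' \<longleftrightarrow> i = i' \<and> j = j' \<and> k = k'"
proof
  assume eq: "nf_word i j k = nf_word i' j' k'"
  have take_ones: "takeWhile (\<lambda>a. a \<noteq> 0) (nf_word i j k) = replicate i (1::nat)" for i j k
  proof -
    have "takeWhile (\<lambda>a. a \<noteq> 0) (concat (replicate j [0,1]) @ replicate k (0::nat)) = []"
      by (cases j; cases k) auto
    then show ?thesis unfolding nf_word_def by (subst takeWhile_append2) auto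
  qed
  have count_ones: "length (filter (\<lambda>a. a \<noteq> 0) (nf_word i j k)) = i + j" for i j k
    by (induction j) (simp_all add: nf_word_def)
  have "i = i'" using arg_cong[OF eq, of "takeWhile (\<lambda>a. a \<noteq> 0)"] by (simp only: take_ones) simp
  moreover have "j = j'" using arg_cong[OF eq, of "\<lambda>w. length (filter (\<lambda>a. a \<noteq> 0) w)"] \<open>i = i'\<close>
    by (simp only: count_ones)
  moreover have "k = k'" using arg_cong[OF eq, of length] \<open>i = i'\<close> \<open>j = j'\<close>
    by (simp add: length_nf_word)
  ultimately show "i = i' \<and> j = j' \<and> k = k'" by simp
qed simp

definition nf_box :: "nat \<Rightarrow> nat list set" where
  "nf_box B = (\<lambda>(i, j, k). nf_word i j k) ` ({..<B} \<times> {..<B} \<times> {..<B})"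

lemma inj_on_nf_word_box: "inj_on (\<lambda>(i, j, k). nf_word i j k) A"
  by (auto intro!: inj_onI simp: nf_word_inject)

lemma finite_subset_nf_words_in_box:
  assumes "finite W" "W \<subseteq> nf_words"
  obtains B where "W \<subseteq> nf_box B"
proof -
  obtain B where B: "\<forall>w\<in>W. length w < B"
    using finite_nat_bounded[of "length ` W"] assms(1) by (auto simp: lessThan_def)
  have "W \<subseteq> nf_box B"
  proof
    fix w assume "w \<in> W"
    moreover obtain i j k where "w = nf_word i j k" using \<open>w \<in> W\<close> assms(2) by (auto simp: nf_words_def)
    ultimately show "w \<in> nf_box B" using B
      by (auto simp: nf_box_def length_nf_word intro!: image_eqI[of _ _ "(i, j, k)"])
  qed
  then show ?thesis by (rule that)
qed


section \<open>The action of \<open>A\<close> on sequences in \<open>k[u, v]\<close>\<close>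

type_synonym 'k uv_seq = "int \<Rightarrow> 'k poly poly"

definition linear_op :: "('k::comm_ring_1 uv_seq \<Rightarrow> 'k uv_seq) \<Rightarrow> bool" where
  "linear_op F \<longleftrightarrow> (\<forall>f h. F (\<lambda>n. f n + h n) = (\<lambda>n. F f n + F h n))
                   \<and> (\<forall>c f. F (\<lambda>n. const_uv c * f n) = (\<lambda>n. const_uv c * F f n))"

lemma linear_opD:
  assumes "linear_op F"
  shows "F (\<lambda>n. f n + h n) = (\<lambda>n. F f n + F h n)"
    and "F (\<lambda>n. const_uv c * f n) = (\<lambda>n. const_uv c * F f n)"
  using assms by (simp_all add: linear_op_def)

lemma linear_op_zero: "linear_op F \<Longrightarrow> F (\<lambda>n. 0) = (\<lambda>n. 0)"
  using linear_opD(2)[of F 0 "\<lambda>n. 0"] by simp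

lemma linear_op_sum:
  assumes "linear_op F"
  shows "F (\<lambda>n. \<Sum>i\<in>S. f i n) = (\<lambda>n. \<Sum>i\<in>S. F (f i) n)"
proof (induction S rule: infinite_finite_induct)
  case (insert i S)
  then show ?case using linear_opD(1)[OF assms, of "f i" "\<lambda>n. \<Sum>i\<in>S. f i n"] by simp
qed (simp_all add: linear_op_zero[OF assms])

lemma linear_op_funpow: "linear_op F \<Longrightarrow> linear_op (F ^^ n)"
  by (induction n) (simp_all add: linear_op_def)

locale down_up =
  fixes \<alpha> \<beta> :: "'k::field"
  assumes beta_nonzero: "\<beta> \<noteq> 0"
begin

definition sigma :: "'k poly poly \<Rightarrow> 'k poly poly" where
  "sigma = subst_bipoly const_uv (lin_uv \<alpha> \<beta>) var_u"

definition sigma_inv :: "'k poly poly \<Rightarrow> 'k poly poly" where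
  "sigma_inv = subst_bipoly const_uv var_v (lin_uv (1 / \<beta>) (- \<alpha> / \<beta>))"

sublocale sigma: comm_ring_hom sigma
  unfolding sigma_def by (rule comm_ring_hom_subst_bipoly[OF const_uv.comm_ring_hom_axioms])

sublocale sigma_inv: comm_ring_hom sigma_inv
  unfolding sigma_inv_def by (rule comm_ring_hom_subst_bipoly[OF const_uv.comm_ring_hom_axioms])

lemma sigma_const_uv [simp]: "sigma (const_uv c) = const_uv c"
  unfolding sigma_def by (rule subst_bipoly_const_uv[OF const_uv.comm_ring_hom_axioms])

lemma sigma_inv_const_uv [simp]: "sigma_inv (const_uv c) = const_uv c"
  unfolding sigma_inv_def by (rule subst_bipoly_const_uv[OF const_uv.comm_ring_hom_axioms])

lemma sigma_var_u: "sigma var_u = lin_uv \<alpha> \<beta>"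
  unfolding sigma_def by (rule subst_bipoly_var_u[OF const_uv.comm_ring_hom_axioms])

lemma sigma_var_v [simp]: "sigma var_v = var_u"
  unfolding sigma_def by (rule subst_bipoly_var_v[OF const_uv.comm_ring_hom_axioms])

lemma sigma_inv_var_u [simp]: "sigma_inv var_u = var_v"
  unfolding sigma_inv_def by (rule subst_bipoly_var_u[OF const_uv.comm_ring_hom_axioms])

lemma sigma_inv_var_v: "sigma_inv var_v = lin_uv (1 / \<beta>) (- \<alpha> / \<beta>)"
  unfolding sigma_inv_def by (rule subst_bipoly_var_v[OF const_uv.comm_ring_hom_axioms])

lemma sigma_lin_uv: "sigma (lin_uv p q) = lin_uv (p * \<alpha> + q) (p * \<beta>)"
proof -
  have "sigma (lin_uv p q) = const_uv p * (const_uv \<alpha> * var_u + const_uv \<beta> * var_v) + const_uv q * var_u"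
    by (simp add: lin_uv_def sigma_var_u)
  also have "\<dots> = (const_uv p * const_uv \<alpha> + const_uv q) * var_u + (const_uv p * const_uv \<beta>) * var_v"
    by (simp add: algebra_simps)
  finally show ?thesis by (simp add: lin_uv_def)
qed

lemma sigma_sigma_inv [simp]: "sigma (sigma_inv f) = f"
proof -
  have "sigma (sigma_inv f) = subst_bipoly const_uv (sigma var_v) (sigma (lin_uv (1 / \<beta>) (- \<alpha> / \<beta>))) f"
    unfolding sigma_inv_def
    by (simp add: hom_subst_bipoly[OF const_uv.comm_ring_hom_axioms sigma.comm_ring_hom_axioms])
  also have "sigma (lin_uv (1 / \<beta>) (- \<alpha> / \<beta>)) = var_v"
    using beta_nonzero by (simp add: sigma_lin_uv lin_uv_0_1[symmetric])
  finally show ?thesis by (simp add: subst_bipoly_vars)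
qed

lemma sigma_inv_sigma [simp]: "sigma_inv (sigma f) = f"
proof -
  have "sigma_inv (sigma f) = subst_bipoly const_uv (sigma_inv (lin_uv \<alpha> \<beta>)) (sigma_inv var_u) f"
    unfolding sigma_def
    by (simp add: hom_subst_bipoly[OF const_uv.comm_ring_hom_axioms sigma_inv.comm_ring_hom_axioms])
  also have "sigma_inv (lin_uv \<alpha> \<beta>) = var_u"
  proof -
    have "sigma_inv (lin_uv \<alpha> \<beta>) = const_uv \<alpha> * var_v + const_uv \<beta> * (const_uv (1 / \<beta>) * var_u + const_uv (- \<alpha> / \<beta>) * var_v)"
      by (simp add: lin_uv_def sigma_inv_var_v)
    also have "\<dots> = (const_uv \<alpha> + const_uv \<beta> * const_uv (- \<alpha> / \<beta>)) * var_v
                       + (const_uv \<beta> * const_uv (1 / \<beta>)) * var_u"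
      by (simp add: algebra_simps)
    also have "\<dots> = var_u"
      using beta_nonzero by (simp flip: const_uv.hom_mult const_uv.hom_add)
    finally show ?thesis .
  qed
  finally show ?thesis by (simp add: subst_bipoly_vars)
qed

lemma sigma_eq_iff [simp]: "sigma f = sigma g \<longleftrightarrow> f = g"
  by (metis sigma_inv_sigma)

lemma sigma_inv_eq_iff [simp]: "sigma_inv f = sigma_inv g \<longleftrightarrow> f = g"
  by (metis sigma_sigma_inv)

lemma sigma_eq_0_iff [simp]: "sigma f = 0 \<longleftrightarrow> f = 0"
  using sigma_eq_iff[of f 0] by simp

lemma sigma_inv_eq_0_iff [simp]: "sigma_inv f = 0 \<longleftrightarrow> f = 0"
  using sigma_inv_eq_iff[of f 0] by simp


definition act_x :: "'k uv_seq \<Rightarrow> 'k uv_seq" where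
  "act_x g = (\<lambda>n. sigma (g (n - 1)))"

definition act_y :: "'k uv_seq \<Rightarrow> 'k uv_seq" where
  "act_y g = (\<lambda>n. var_v * sigma_inv (g (n + 1)))"

text \<open>Letters other than \<open>0\<close> act like \<open>y\<close>; only words in \<open>x = 0\<close> and \<open>y = 1\<close> matter.\<close>

definition letter_op :: "nat \<Rightarrow> 'k uv_seq \<Rightarrow> 'k uv_seq" where
  "letter_op a = (if a = 0 then act_x else act_y)"

primrec word_op :: "nat list \<Rightarrow> 'k uv_seq \<Rightarrow> 'k uv_seq" where
  "word_op [] g = g"
| "word_op (a # w) g = letter_op a (word_op w g)"

definition poly_op :: "'k ncpoly \<Rightarrow> 'k uv_seq \<Rightarrow> 'k uv_seq" where
  "poly_op p g = (\<lambda>n. \<Sum>w\<in>Poly_Mapping.keys p. const_uv (Poly_Mapping.lookup p w) * word_op w g n)"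

lemma letter_op_simps [simp]: "letter_op 0 = act_x" "letter_op (Suc a) = act_y"
  by (simp_all add: letter_op_def)

lemma linear_op_act_x: "linear_op act_x"
  by (simp add: linear_op_def act_x_def)

lemma linear_op_act_y: "linear_op act_y"
  by (simp add: linear_op_def act_y_def algebra_simps)

lemma linear_op_letter_op: "linear_op (letter_op a)"
  by (simp add: letter_op_def linear_op_act_x linear_op_act_y)

lemma linear_op_word_op: "linear_op (word_op w)"
  by (induction w) (simp_all add: linear_op_def linear_opD[OF linear_op_letter_op])

lemma word_op_append: "word_op (u @ w) g = word_op u (word_op w g)"
  by (induction u) simp_all

lemma linear_op_poly_op: "linear_op (poly_op p)"
  unfolding linear_op_def poly_op_def
  by (simp add: linear_opD[OF linear_op_word_op] distrib_left sum.distrib sum_distrib_left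
      mult.left_commute)

lemma poly_op_superset:
  assumes "finite S" "Poly_Mapping.keys p \<subseteq> S"
  shows "poly_op p g n = (\<Sum>w\<in>S. const_uv (Poly_Mapping.lookup p w) * word_op w g n)"
  unfolding poly_op_def
  by (rule sum.mono_neutral_left) (use assms in \<open>auto simp: in_keys_iff\<close>)

lemma poly_op_add: "poly_op (p + q) g n = poly_op p g n + poly_op q g n"
proof -
  let ?S = "Poly_Mapping.keys p \<union> Poly_Mapping.keys q"
  have "Poly_Mapping.keys (p + q) \<subseteq> ?S" by (rule keys_add)
  then show ?thesis
    by (simp add: poly_op_superset[of ?S] lookup_add distrib_right sum.distrib)
qed

lemma poly_op_zero [simp]: "poly_op 0 g n = 0"
  by (simp add: poly_op_def)

lemma poly_op_diff: "poly_op (p - q) g n = poly_op p g n - poly_op q g n"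
  using poly_op_add[of "p - q" q g n] by (simp add: algebra_simps)

lemma poly_op_single: "poly_op (Poly_Mapping.single w c) g n = const_uv c * word_op w g n"
  by (cases "c = 0") (simp_all add: poly_op_def)

lemma poly_op_sum: "poly_op (\<Sum>i\<in>S. p i) g n = (\<Sum>i\<in>S. poly_op (p i) g n)"
  by (induction S rule: infinite_finite_induct) (simp_all add: poly_op_add)

lemma poly_op_nc_mult: "poly_op (nc_mult p q) g = poly_op p (poly_op q g)"
proof
  fix n
  have "poly_op (nc_mult p q) g n = (\<Sum>u\<in>Poly_Mapping.keys p. \<Sum>v\<in>Poly_Mapping.keys q.
      const_uv (Poly_Mapping.lookup p u * Poly_Mapping.lookup q v) * word_op (u @ v) g n)"
    by (simp add: nc_mult_def poly_op_sum poly_op_single)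
  also have "\<dots> = (\<Sum>u\<in>Poly_Mapping.keys p. const_uv (Poly_Mapping.lookup p u) *
      (\<Sum>v\<in>Poly_Mapping.keys q. const_uv (Poly_Mapping.lookup q v) * word_op u (word_op v g) n))"
    by (simp add: word_op_append sum_distrib_left mult.assoc)
  also have "\<dots> = poly_op p (poly_op q g) n"
    by (simp add: poly_op_def linear_op_sum[OF linear_op_word_op]
        linear_opD(2)[OF linear_op_word_op] sum_distrib_left)
  finally show "poly_op (nc_mult p q) g n = poly_op p (poly_op q g) n" .
qed

lemma poly_op_nc_one [simp]: "poly_op nc_one g = g"
  by (simp add: fun_eq_iff nc_one_def poly_op_single)

lemma poly_op_nc_smul: "poly_op (nc_smul c p) g n = const_uv c * poly_op p g n"
  by (simp add: nc_smul_def poly_op_nc_mult poly_op_single)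

lemma poly_op_nc_var: "poly_op (nc_var a) g = letter_op a g"
  by (simp add: fun_eq_iff nc_var_def poly_op_single)

lemma poly_op_du_rel1: "poly_op (du_rel1 \<alpha> \<beta>) g n = 0"
proof -
  have "poly_op (du_rel1 \<alpha> \<beta>) g n
      = word_op [0,0,1] g n - const_uv \<alpha> * word_op [0,1,0] g n - const_uv \<beta> * word_op [1,0,0] g n"
    by (simp add: du_rel1_def poly_op_diff poly_op_single)
  also have "\<dots> = (sigma var_u - const_uv \<alpha> * var_u - const_uv \<beta> * var_v) * sigma (g (n - 1))"
    by (simp add: act_x_def act_y_def algebra_simps)
  also have "\<dots> = 0" by (simp add: sigma_var_u lin_uv_def)
  finally show ?thesis .
qed

lemma poly_op_du_rel2: "poly_op (du_rel2 \<alpha> \<beta>) g n = 0"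
proof -
  have "poly_op (du_rel2 \<alpha> \<beta>) g n
      = word_op [0,1,1] g n - const_uv \<alpha> * word_op [1,0,1] g n - const_uv \<beta> * word_op [1,1,0] g n"
    by (simp add: du_rel2_def poly_op_diff poly_op_single)
  also have "\<dots> = var_v * (var_u - const_uv \<alpha> * var_v - const_uv \<beta> * sigma_inv var_v) * sigma_inv (g (n + 1))"
    by (simp add: act_x_def act_y_def algebra_simps)
  also have "const_uv \<beta> * sigma_inv var_v = var_u - const_uv \<alpha> * var_v"
  proof -
    have "const_uv \<beta> * sigma_inv var_v
        = (const_uv \<beta> * const_uv (1 / \<beta>)) * var_u + (const_uv \<beta> * const_uv (- \<alpha> / \<beta>)) * var_v"
      by (simp add: sigma_inv_var_v lin_uv_def algebra_simps)
    also have "\<dots> = var_u - const_uv \<alpha> * var_v"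
      using beta_nonzero by (simp flip: const_uv.hom_mult)
    finally show ?thesis .
  qed
  finally show ?thesis by simp
qed

lemma poly_op_du_ideal: "p \<in> du_ideal \<alpha> \<beta> \<Longrightarrow> poly_op p g = (\<lambda>n. 0)"
proof (induction arbitrary: g rule: du_ideal.induct)
  case (gen r a b)
  then have "poly_op r h = (\<lambda>n. 0)" for h
    using poly_op_du_rel1 poly_op_du_rel2 by auto
  then show ?case by (simp add: poly_op_nc_mult linear_op_zero[OF linear_op_poly_op])
qed (simp_all add: fun_eq_iff poly_op_add)

lemma poly_op_eq_if_du_ideal: "p - q \<in> du_ideal \<alpha> \<beta> \<Longrightarrow> poly_op p g = poly_op q g"
  using poly_op_du_ideal[of "p - q" g] by (simp add: fun_eq_iff poly_op_diff)


section \<open>Faithfulness\<close>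

definition seq_at :: "int \<Rightarrow> 'k poly poly \<Rightarrow> 'k uv_seq" where
  "seq_at m r = (\<lambda>n. if n = m then r else 0)"

definition nf_value :: "nat \<Rightarrow> nat \<Rightarrow> 'k poly poly" where
  "nf_value i j = ((\<lambda>r. var_v * sigma_inv r) ^^ i) (var_u ^ j)"

lemma nf_value_0: "nf_value 0 j = [:monom 1 j:]"
  by (simp add: nf_value_def var_u_def monom_altdef flip: pCons_one)
    (induction j, simp_all add: one_pCons)

lemma nf_value_Suc: "nf_value (Suc i) j = var_v * sigma_inv (nf_value i j)"
  by (simp add: nf_value_def)

lemma act_x_seq_at: "act_x (seq_at m r) = seq_at (m + 1) (sigma r)"
  by (auto simp: act_x_def seq_at_def)

lemma act_y_seq_at: "act_y (seq_at m r) = seq_at (m - 1) (var_v * sigma_inv r)"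
  by (auto simp: act_y_def seq_at_def)

lemma word_op_nf_word: "word_op (nf_word i j k) (seq_at 0 1) = seq_at (int k - int i) (nf_value i j)"
proof -
  have x: "word_op (replicate k 0) (seq_at 0 1) = seq_at (int k) 1"
    by (induction k) (simp_all add: act_x_seq_at algebra_simps)
  have xy: "word_op (concat (replicate j [0, Suc 0])) (seq_at m r) = seq_at m (var_u ^ j * r)" for m r
    by (induction j) (simp_all add: word_op_append act_x_seq_at act_y_seq_at algebra_simps)
  have y: "word_op (replicate i (Suc 0)) (seq_at m r) = seq_at (m - int i) (((\<lambda>r. var_v * sigma_inv r) ^^ i) r)"
    for m r
    by (induction i) (simp_all add: act_y_seq_at algebra_simps)
  show ?thesis by (simp add: nf_word_def word_op_append x xy y nf_value_def)
qed

lemma nf_value_sum_Suc: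
  "(\<Sum>i<Suc I. \<Sum>j<J. const_uv (d i j) * nf_value i j)
     = [:\<Sum>j<J. monom (d 0 j) j:]
       + var_v * sigma_inv (\<Sum>i<I. \<Sum>j<J. const_uv (d (Suc i) j) * nf_value i j)"
proof -
  have "const_uv c * [:monom 1 j:] = [:monom c j:]" for c :: 'k and j
    by (simp add: const_uv_def mult_pCons_left smult_monom)
  then have "(\<Sum>j<J. const_uv (d 0 j) * nf_value 0 j) = [:\<Sum>j<J. monom (d 0 j) j:]"
    by (simp add: nf_value_0 comm_ring_hom.hom_sum[OF comm_ring_hom_const_poly])
  then show ?thesis
    by (simp add: sum.lessThan_Suc_shift nf_value_Suc sum_distrib_left algebra_simps
        del: sum.lessThan_Suc)
qed

lemma nf_values_independent:
  assumes "(\<Sum>i<I. \<Sum>j<J. const_uv (d i j) * nf_value i j) = 0" "i < I" "j < J"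
  shows "d i j = 0"
  using assms
proof (induction I arbitrary: d i)
  case (Suc I)
  define X where "X = (\<Sum>i<I. \<Sum>j<J. const_uv (d (Suc i) j) * nf_value i j)"
  have sum0: "[:\<Sum>j<J. monom (d 0 j) j:] + var_v * sigma_inv X = 0"
    using Suc.prems(1) by (simp only: nf_value_sum_Suc X_def)
  then have "coeff [:\<Sum>j<J. monom (d 0 j) j:] 0 = 0"
    using arg_cong[OF sum0, of "\<lambda>f. coeff f 0"] by (simp add: var_v_def)
  then have "coeff (\<Sum>j'<J. monom (d 0 j') j') j = 0" by simp
  then have d0: "d 0 j = 0" using Suc.prems(3) by (simp add: coeff_sum)
  show ?case
  proof (cases i)
    case 0
    with d0 show ?thesis by simp
  next
    case (Suc i')
    have "(\<Sum>j<J. monom (d 0 j) j) = 0"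
      using arg_cong[OF sum0, of "\<lambda>f. coeff f 0"] by (simp add: var_v_def)
    then have "X = 0" using sum0 by simp
    then show ?thesis using Suc.IH[of "\<lambda>i. d (Suc i)" i'] Suc.prems(2,3) \<open>i = Suc i'\<close>
      by (simp add: X_def)
  qed
qed simp


lemma poly_op_nf_box:
  assumes "Poly_Mapping.keys q \<subseteq> nf_box B"
  shows "poly_op q (seq_at 0 1) n = (\<Sum>i<B. \<Sum>j<B.
           const_uv (\<Sum>k<B. if int k - int i = n then Poly_Mapping.lookup q (nf_word i j k) else 0)
             * nf_value i j)"
proof -
  have "poly_op q (seq_at 0 1) n
      = (\<Sum>w\<in>nf_box B. const_uv (Poly_Mapping.lookup q w) * word_op w (seq_at 0 1) n)"
    using assms by (intro poly_op_superset) (simp_all add: nf_box_def)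
  also have "\<dots> = (\<Sum>(i, j, k)\<in>{..<B} \<times> {..<B} \<times> {..<B}.
      const_uv (Poly_Mapping.lookup q (nf_word i j k)) * seq_at (int k - int i) (nf_value i j) n)"
    unfolding nf_box_def by (subst sum.reindex[OF inj_on_nf_word_box]) (simp add: case_prod_unfold word_op_nf_word)
  also have "\<dots> = (\<Sum>i<B. \<Sum>j<B. \<Sum>k<B.
      const_uv (Poly_Mapping.lookup q (nf_word i j k)) * seq_at (int k - int i) (nf_value i j) n)"
    by (simp add: sum.cartesian_product)
  also have "\<dots> = (\<Sum>i<B. \<Sum>j<B. const_uv
      (\<Sum>k<B. if int k - int i = n then Poly_Mapping.lookup q (nf_word i j k) else 0) * nf_value i j)"
  proof -
    have "const_uv c * seq_at m r n = const_uv (if m = n then c else 0) * r" for c m r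
      by (simp add: seq_at_def)
    then show ?thesis by (simp add: sum_distrib_right)
  qed
  finally show ?thesis .
qed

lemma poly_op_nf_eq_0:
  assumes "Poly_Mapping.keys q \<subseteq> nf_words" "poly_op q (seq_at 0 1) = (\<lambda>n. 0)"
  shows "q = 0"
proof (rule ccontr)
  assume "q \<noteq> 0"
  then obtain w where w: "w \<in> Poly_Mapping.keys q" by fastforce
  obtain B where B: "Poly_Mapping.keys q \<subseteq> nf_box B"
    using finite_subset_nf_words_in_box[OF finite_keys assms(1)] .
  with w obtain i j k where ijk: "w = nf_word i j k" "i < B" "j < B" "k < B"
    by (auto simp: nf_box_def)
  define d where "d i' j' = (\<Sum>k'<B. if int k' - int i' = int k - int i
                                  then Poly_Mapping.lookup q (nf_word i' j' k') else 0)" for i' j'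
  have "(\<Sum>i'<B. \<Sum>j'<B. const_uv (d i' j') * nf_value i' j') = 0"
    using poly_op_nf_box[OF B, of "int k - int i"] assms(2) by (simp add: d_def)
  then have "d i j = 0" by (rule nf_values_independent[OF _ ijk(2,3)])
  then show False using w ijk by (simp add: d_def in_keys_iff)
qed

lemma poly_op_faithful:
  assumes "p \<in> du_words" "poly_op p (seq_at 0 1) = (\<lambda>n. 0)"
  shows "p \<in> du_ideal \<alpha> \<beta>"
proof -
  obtain q where q: "Poly_Mapping.keys q \<subseteq> nf_words" "p - q \<in> du_ideal \<alpha> \<beta>"
    using du_words_nf_reducible[OF assms(1), of \<alpha> \<beta>] by (auto simp: nf_reducible_def)
  then have "poly_op q (seq_at 0 1) = (\<lambda>n. 0)"
    using assms(2) poly_op_eq_if_du_ideal by metis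
  then show ?thesis using q poly_op_nf_eq_0 by fastforce
qed

lemma var_v_dvd_poly_op_nf:
  assumes "Poly_Mapping.keys q \<subseteq> nf_words"
  shows "var_v dvd poly_op q (seq_at 0 1) (- 1)"
proof -
  obtain B where B: "Poly_Mapping.keys q \<subseteq> nf_box B"
    using finite_subset_nf_words_in_box[OF finite_keys assms] .
  have "var_v dvd const_uv (\<Sum>k<B. if int k - int i = - 1 then Poly_Mapping.lookup q (nf_word i j k) else 0)
          * nf_value i j" for i j
    by (cases i) (simp_all add: nf_value_Suc)
  then show ?thesis by (simp add: poly_op_nf_box[OF B] dvd_sum)
qed

end


section \<open>Elements of \<open>A\<close> and their action\<close>

definition du_rep :: "'k ncpoly set \<Rightarrow> 'k ncpoly" where
  "du_rep P = (SOME p. p \<in> P)"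

lemma du_add_eq: "du_add \<alpha> \<beta> P Q = du_class \<alpha> \<beta> (du_rep P + du_rep Q)"
  by (simp add: du_add_def du_rep_def)

lemma du_mult_eq: "du_mult \<alpha> \<beta> P Q = du_class \<alpha> \<beta> (nc_mult (du_rep P) (du_rep Q))"
  by (simp add: du_mult_def du_rep_def)

lemma du_smul_eq: "du_smul \<alpha> \<beta> c P = du_class \<alpha> \<beta> (nc_smul c (du_rep P))"
  by (simp add: du_smul_def du_rep_def)

lemma du_class_in_carrier: "p \<in> du_words \<Longrightarrow> du_class \<alpha> \<beta> p \<in> du_carrier \<alpha> \<beta>"
  by (simp add: du_carrier_def)

lemma du_carrierE:
  assumes "P \<in> du_carrier \<alpha> \<beta>"
  obtains p where "p \<in> du_words" "P = du_class \<alpha> \<beta> p"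
  using assms by (auto simp: du_carrier_def)

lemma du_rep_class:
  assumes "p \<in> du_words"
  shows "du_rep (du_class \<alpha> \<beta> p) \<in> du_words" "du_rep (du_class \<alpha> \<beta> p) - p \<in> du_ideal \<alpha> \<beta>"
proof -
  have "p \<in> du_class \<alpha> \<beta> p" using assms by (simp add: du_class_def du_ideal.zero)
  then have "du_rep (du_class \<alpha> \<beta> p) \<in> du_class \<alpha> \<beta> p" unfolding du_rep_def by (rule someI)
  then show "du_rep (du_class \<alpha> \<beta> p) \<in> du_words" "du_rep (du_class \<alpha> \<beta> p) - p \<in> du_ideal \<alpha> \<beta>"
    by (simp_all add: du_class_def)
qed

lemma du_class_eq:
  assumes "p - q \<in> du_ideal \<alpha> \<beta>"
  shows "du_class \<alpha> \<beta> p = du_class \<alpha> \<beta> q"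
proof -
  have "r - q \<in> du_ideal \<alpha> \<beta> \<longleftrightarrow> r - p \<in> du_ideal \<alpha> \<beta>" for r
    using du_ideal.add[OF _ assms, of "r - p"] du_ideal_diff[OF _ assms, of "r - q"] by auto
  then show ?thesis by (auto simp: du_class_def)
qed

lemma du_rep_in_words: "P \<in> du_carrier \<alpha> \<beta> \<Longrightarrow> du_rep P \<in> du_words"
  by (metis du_carrierE du_rep_class(1))

lemma du_add_in_carrier: "P \<in> du_carrier \<alpha> \<beta> \<Longrightarrow> Q \<in> du_carrier \<alpha> \<beta> \<Longrightarrow> du_add \<alpha> \<beta> P Q \<in> du_carrier \<alpha> \<beta>"
  unfolding du_add_eq by (intro du_class_in_carrier du_words_add du_rep_in_words)

lemma du_mult_in_carrier: "P \<in> du_carrier \<alpha> \<beta> \<Longrightarrow> Q \<in> du_carrier \<alpha> \<beta> \<Longrightarrow> du_mult \<alpha> \<beta> P Q \<in> du_carrier \<alpha> \<beta>"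
  unfolding du_mult_eq by (intro du_class_in_carrier du_words_mult du_rep_in_words)

lemma du_smul_in_carrier: "P \<in> du_carrier \<alpha> \<beta> \<Longrightarrow> du_smul \<alpha> \<beta> c P \<in> du_carrier \<alpha> \<beta>"
  unfolding du_smul_eq by (intro du_class_in_carrier du_words_smul du_rep_in_words)

lemma du_one_in_carrier: "du_one \<alpha> \<beta> \<in> du_carrier \<alpha> \<beta>"
  unfolding du_one_def by (intro du_class_in_carrier du_words_nc_one)

lemma du_x_in_carrier: "du_x \<alpha> \<beta> \<in> du_carrier \<alpha> \<beta>"
  unfolding du_x_def by (intro du_class_in_carrier du_words_var) simp

lemma du_y_in_carrier: "du_y \<alpha> \<beta> \<in> du_carrier \<alpha> \<beta>"
  unfolding du_y_def by (intro du_class_in_carrier du_words_var) simp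

primrec du_pow :: "'k::comm_ring_1 \<Rightarrow> 'k \<Rightarrow> 'k ncpoly set \<Rightarrow> nat \<Rightarrow> 'k ncpoly set" where
  "du_pow \<alpha> \<beta> P 0 = du_one \<alpha> \<beta>"
| "du_pow \<alpha> \<beta> P (Suc n) = du_mult \<alpha> \<beta> P (du_pow \<alpha> \<beta> P n)"

lemma du_pow_in_carrier: "P \<in> du_carrier \<alpha> \<beta> \<Longrightarrow> du_pow \<alpha> \<beta> P n \<in> du_carrier \<alpha> \<beta>"
  by (induction n) (simp_all add: du_one_in_carrier du_mult_in_carrier)

lemma du_is_aut_in_carrier: "du_is_aut \<alpha> \<beta> \<phi> \<Longrightarrow> P \<in> du_carrier \<alpha> \<beta> \<Longrightarrow> \<phi> P \<in> du_carrier \<alpha> \<beta>"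
  by (auto simp: du_is_aut_def bij_betw_def)

lemma du_is_aut_pow:
  assumes "du_is_aut \<alpha> \<beta> \<phi>" "P \<in> du_carrier \<alpha> \<beta>"
  shows "\<phi> (du_pow \<alpha> \<beta> P n) = du_pow \<alpha> \<beta> (\<phi> P) n"
  using assms by (induction n) (simp_all add: du_is_aut_def du_pow_in_carrier)

context down_up
begin

definition class_op :: "'k ncpoly set \<Rightarrow> 'k uv_seq \<Rightarrow> 'k uv_seq" where
  "class_op P = poly_op (du_rep P)"

lemma class_op_class: "p \<in> du_words \<Longrightarrow> class_op (du_class \<alpha> \<beta> p) = poly_op p"
  unfolding class_op_def by (rule ext) (intro poly_op_eq_if_du_ideal du_rep_class)

lemma du_carrier_eqI:
  assumes "P \<in> du_carrier \<alpha> \<beta>" "Q \<in> du_carrier \<alpha> \<beta>"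
    and "class_op P (seq_at 0 1) = class_op Q (seq_at 0 1)"
  shows "P = Q"
proof -
  obtain p q where pq: "p \<in> du_words" "P = du_class \<alpha> \<beta> p" "q \<in> du_words" "Q = du_class \<alpha> \<beta> q"
    using assms(1,2) by (metis du_carrierE)
  then have "poly_op (p - q) (seq_at 0 1) = (\<lambda>n. 0)"
    using assms(3) by (simp add: class_op_class fun_eq_iff poly_op_diff)
  then have "p - q \<in> du_ideal \<alpha> \<beta>" using poly_op_faithful du_words_diff pq by blast
  then show ?thesis using du_class_eq pq by simp
qed

lemma class_op_du_add:
  "P \<in> du_carrier \<alpha> \<beta> \<Longrightarrow> Q \<in> du_carrier \<alpha> \<beta> \<Longrightarrow>
     class_op (du_add \<alpha> \<beta> P Q) g n = class_op P g n + class_op Q g n"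
  by (simp add: du_add_eq class_op_class du_words_add du_rep_in_words poly_op_add) (simp add: class_op_def)

lemma class_op_du_mult:
  "P \<in> du_carrier \<alpha> \<beta> \<Longrightarrow> Q \<in> du_carrier \<alpha> \<beta> \<Longrightarrow>
     class_op (du_mult \<alpha> \<beta> P Q) g = class_op P (class_op Q g)"
  by (simp add: du_mult_eq class_op_class du_words_mult du_rep_in_words poly_op_nc_mult)
    (simp add: class_op_def)

lemma class_op_du_smul:
  "P \<in> du_carrier \<alpha> \<beta> \<Longrightarrow> class_op (du_smul \<alpha> \<beta> c P) g n = const_uv c * class_op P g n"
  by (simp add: du_smul_eq class_op_class du_words_smul du_rep_in_words poly_op_nc_smul)
    (simp add: class_op_def)

lemma class_op_du_one [simp]: "class_op (du_one \<alpha> \<beta>) = id"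
  by (simp add: du_one_def class_op_class du_words_nc_one fun_eq_iff)

lemma class_op_du_x [simp]: "class_op (du_x \<alpha> \<beta>) = act_x"
  by (simp add: du_x_def class_op_class du_words_var fun_eq_iff poly_op_nc_var)

lemma class_op_du_y [simp]: "class_op (du_y \<alpha> \<beta>) = act_y"
  by (simp add: du_y_def class_op_class du_words_var fun_eq_iff poly_op_nc_var)

lemma class_op_du_pow: "P \<in> du_carrier \<alpha> \<beta> \<Longrightarrow> class_op (du_pow \<alpha> \<beta> P n) = class_op P ^^ n"
proof (induction n)
  case (Suc n)
  then show ?case by (intro ext) (simp add: class_op_du_mult du_pow_in_carrier)
qed simp


section \<open>Degrees\<close>

definition sigma_pow :: "int \<Rightarrow> 'k poly poly \<Rightarrow> 'k poly poly" where
  "sigma_pow d = (if 0 \<le> d then sigma ^^ nat d else sigma_inv ^^ nat (- d))"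

lemma sigma_pow_0 [simp]: "sigma_pow 0 = id"
  by (simp add: sigma_pow_def)

lemma sigma_pow_1: "sigma_pow 1 = sigma"
  by (simp add: sigma_pow_def)

lemma sigma_pow_minus_1: "sigma_pow (- 1) = sigma_inv"
  by (simp add: sigma_pow_def)

lemma sigma_sigma_pow: "sigma (sigma_pow d x) = sigma_pow (d + 1) x"
proof (cases "0 \<le> d")
  case True
  then have "nat (d + 1) = Suc (nat d)" by simp
  with True show ?thesis by (simp add: sigma_pow_def)
next
  case False
  then have "nat (- d) = Suc (nat (- (d + 1)))" by simp
  with False show ?thesis by (simp add: sigma_pow_def)
qed

lemma sigma_inv_sigma_pow: "sigma_inv (sigma_pow d x) = sigma_pow (d - 1) x"
  by (metis sigma_inv_sigma sigma_sigma_pow diff_add_cancel)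

lemma sigma_funpow_eq_0_iff [simp]: "(sigma ^^ n) x = 0 \<longleftrightarrow> x = 0"
  by (induction n) simp_all

lemma sigma_inv_funpow_eq_0_iff [simp]: "(sigma_inv ^^ n) x = 0 \<longleftrightarrow> x = 0"
  by (induction n) simp_all

lemma sigma_pow_eq_0_iff [simp]: "sigma_pow d x = 0 \<longleftrightarrow> x = 0"
  by (simp add: sigma_pow_def)

lemma sigma_pow_zero [simp]: "sigma_pow d 0 = 0"
  by simp

fun word_degree :: "nat list \<Rightarrow> int" where
  "word_degree [] = 0"
| "word_degree (a # w) = (if a = 0 then word_degree w + 1 else word_degree w - 1)"

fun word_coeff :: "nat list \<Rightarrow> 'k poly poly" where
  "word_coeff [] = 1"
| "word_coeff (a # w) = (if a = 0 then sigma (word_coeff w) else var_v * sigma_inv (word_coeff w))"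

lemma word_op_eq: "word_op w g k = word_coeff w * sigma_pow (word_degree w) (g (k - word_degree w))"
proof (induction w arbitrary: k)
  case (Cons a w)
  then show ?case
    by (simp add: letter_op_def act_x_def act_y_def sigma_sigma_pow sigma_inv_sigma_pow algebra_simps)
qed simp

definition graded_op :: "int set \<Rightarrow> (int \<Rightarrow> 'k poly poly) \<Rightarrow> 'k uv_seq \<Rightarrow> 'k uv_seq" where
  "graded_op D a g = (\<lambda>k. \<Sum>d\<in>D. a d * sigma_pow d (g (k - d)))"

definition degree_coeff :: "'k ncpoly \<Rightarrow> int \<Rightarrow> 'k poly poly" where
  "degree_coeff p d = (\<Sum>w\<in>{w\<in>Poly_Mapping.keys p. word_degree w = d}.
                          const_uv (Poly_Mapping.lookup p w) * word_coeff w)"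

lemma poly_op_eq_graded_op:
  "poly_op p = graded_op (word_degree ` Poly_Mapping.keys p) (degree_coeff p)"
proof (intro ext)
  fix g k
  have "poly_op p g k = (\<Sum>d\<in>word_degree ` Poly_Mapping.keys p. \<Sum>w\<in>{w\<in>Poly_Mapping.keys p. word_degree w = d}.
      const_uv (Poly_Mapping.lookup p w) * (word_coeff w * sigma_pow (word_degree w) (g (k - word_degree w))))"
    unfolding poly_op_def word_op_eq by (rule sum.group[symmetric]) auto
  also have "\<dots> = graded_op (word_degree ` Poly_Mapping.keys p) (degree_coeff p) g k"
    unfolding graded_op_def degree_coeff_def sum_distrib_right
    by (intro sum.cong refl) (auto simp: algebra_simps)
  finally show "poly_op p g k = graded_op (word_degree ` Poly_Mapping.keys p) (degree_coeff p) g k" .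
qed

definition has_top :: "'k uv_seq \<Rightarrow> int \<Rightarrow> bool" where
  "has_top g m \<longleftrightarrow> g m \<noteq> 0 \<and> (\<forall>j>m. g j = 0)"

definition has_bottom :: "'k uv_seq \<Rightarrow> int \<Rightarrow> bool" where
  "has_bottom g m \<longleftrightarrow> g m \<noteq> 0 \<and> (\<forall>j<m. g j = 0)"

lemma has_top_graded_op:
  assumes D: "finite D" "hi \<in> D" "a hi \<noteq> 0" "\<forall>d\<in>D. hi < d \<longrightarrow> a d = 0" and g: "has_top g m"
  shows "has_top (graded_op D a g) (m + hi)"
proof -
  have vanish: "a d * sigma_pow d (g (k - d)) = 0"
    if "d \<in> D" "k > m + hi \<or> (k = m + hi \<and> d \<noteq> hi)" for d k
    using that D(4) g by (cases "hi < d") (auto simp: has_top_def)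
  have "graded_op D a g (m + hi) = a hi * sigma_pow hi (g m)"
    unfolding graded_op_def using D(1,2) by (subst sum.remove) (auto intro!: sum.neutral vanish)
  then show ?thesis
    using D(3) g vanish unfolding has_top_def graded_op_def by (auto intro!: sum.neutral)
qed

lemma has_bottom_graded_op:
  assumes D: "finite D" "lo \<in> D" "a lo \<noteq> 0" "\<forall>d\<in>D. d < lo \<longrightarrow> a d = 0" and g: "has_bottom g m"
  shows "has_bottom (graded_op D a g) (m + lo)"
proof -
  have vanish: "a d * sigma_pow d (g (k - d)) = 0"
    if "d \<in> D" "k < m + lo \<or> (k = m + lo \<and> d \<noteq> lo)" for d k
    using that D(4) g by (cases "d < lo") (auto simp: has_bottom_def)
  have "graded_op D a g (m + lo) = a lo * sigma_pow lo (g m)"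
    unfolding graded_op_def using D(1,2) by (subst sum.remove) (auto intro!: sum.neutral vanish)
  then show ?thesis
    using D(3) g vanish unfolding has_bottom_def graded_op_def by (auto intro!: sum.neutral)
qed

lemma has_top_graded_op_funpow:
  assumes "finite D" "hi \<in> D" "a hi \<noteq> 0" "\<forall>d\<in>D. hi < d \<longrightarrow> a d = 0"
  shows "has_top ((graded_op D a ^^ n) (seq_at 0 1)) (int n * hi)"
proof (induction n)
  case (Suc n)
  then show ?case using has_top_graded_op[OF assms Suc.IH] by (simp add: algebra_simps)
qed (simp add: has_top_def seq_at_def)

lemma has_bottom_graded_op_funpow:
  assumes "finite D" "lo \<in> D" "a lo \<noteq> 0" "\<forall>d\<in>D. d < lo \<longrightarrow> a d = 0"
  shows "has_bottom ((graded_op D a ^^ n) (seq_at 0 1)) (int n * lo)"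
proof (induction n)
  case (Suc n)
  then show ?case using has_bottom_graded_op[OF assms Suc.IH] by (simp add: algebra_simps)
qed (simp add: has_bottom_def seq_at_def)

text \<open>The top and the bottom degree of the \<open>N\<close>-th power are \<open>N\<close> times those of the operator,
  so both equal \<open>e\<close>.\<close>

lemma graded_op_homogeneous:
  assumes D: "finite D" and N: "N \<ge> 1"
    and pow: "(graded_op D a ^^ N) (seq_at 0 1) = seq_at (int N * e) T" and T: "T \<noteq> 0"
  shows "graded_op D a g k = a e * sigma_pow e (g (k - e))"
proof -
  define D' where "D' = {d\<in>D. a d \<noteq> 0}"
  have finD': "finite D'" using D by (simp add: D'_def)
  have "D' \<noteq> {}"
  proof
    assume "D' = {}"
    then have "graded_op D a h = (\<lambda>k. 0)" for h by (auto simp: graded_op_def D'_def fun_eq_iff)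
    moreover obtain M where "N = Suc M" using N by (cases N) auto
    ultimately have "seq_at (int N * e) T = (\<lambda>k. 0)" using pow by simp
    then show False using T by (auto simp: seq_at_def dest: fun_cong[of _ _ "int N * e"])
  qed
  define hi where "hi = Max D'"
  define lo where "lo = Min D'"
  have "hi \<in> D'" "lo \<in> D'"
    unfolding hi_def lo_def using finD' \<open>D' \<noteq> {}\<close> by (simp_all add: Max_in Min_in)
  moreover have "lo \<le> d" "d \<le> hi" if "d \<in> D'" for d
    unfolding hi_def lo_def using finD' that by (simp_all add: Max_ge Min_le)
  ultimately have hi: "hi \<in> D" "a hi \<noteq> 0" "\<forall>d\<in>D. hi < d \<longrightarrow> a d = 0"
    and lo: "lo \<in> D" "a lo \<noteq> 0" "\<forall>d\<in>D. d < lo \<longrightarrow> a d = 0"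
    by (auto simp: D'_def not_le[symmetric])
  have "int N * hi = int N * e"
    using has_top_graded_op_funpow[OF D hi, of N] pow T by (auto simp: has_top_def seq_at_def split: if_splits)
  then have "hi = e" using N by simp
  have "int N * lo = int N * e"
    using has_bottom_graded_op_funpow[OF D lo, of N] pow T
    by (auto simp: has_bottom_def seq_at_def split: if_splits)
  then have "lo = e" using N by simp
  have "a d = 0" if "d \<in> D" "d \<noteq> e" for d
    using hi(3) lo(3) \<open>hi = e\<close> \<open>lo = e\<close> that by (cases "d < e") auto
  then show ?thesis
    unfolding graded_op_def using D hi(1) \<open>hi = e\<close> by (subst sum.remove) (auto intro!: sum.neutral)
qed

lemma class_op_homogeneous:
  assumes N: "N \<ge> 1" and pow: "(class_op P ^^ N) (seq_at 0 1) = seq_at (int N * e) T"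
    and T: "T \<noteq> 0"
  obtains r where "\<And>g k. class_op P g k = r * sigma_pow e (g (k - e))"
proof -
  define D where "D = word_degree ` Poly_Mapping.keys (du_rep P)"
  have "class_op P = graded_op D (degree_coeff (du_rep P))"
    by (simp add: class_op_def poly_op_eq_graded_op D_def)
  with graded_op_homogeneous[OF _ N _ T] pow show ?thesis
    by (intro that[of "degree_coeff (du_rep P) e"]) (simp add: D_def)
qed

end


section \<open>Elements of \<open>Oz(A)\<close> rescale the generators\<close>

lemma const_uv_of_unit:
  fixes r :: "'k::field poly poly"
  assumes "r * t = 1"
  obtains c where "r = const_uv c"
proof -
  have "r dvd 1" using assms by (metis dvdI)
  then obtain c' where c': "r = [:c':]" "c' dvd 1" using is_unit_poly_iff by blast
  then obtain c where "c' = [:c:]" using is_unit_poly_iff by blast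
  with c' show ?thesis by (intro that[of c]) (simp add: const_uv_def)
qed

context down_up
begin

lemma poly_op_commute:
  assumes "linear_op Z" "\<And>g. Z (act_x g) = act_x (Z g)" "\<And>g. Z (act_y g) = act_y (Z g)"
  shows "Z (poly_op p g) = poly_op p (Z g)"
proof -
  have word: "Z (word_op w g) = word_op w (Z g)" for w
    by (induction w) (simp_all add: letter_op_def assms(2,3))
  show ?thesis
    unfolding poly_op_def
    by (simp add: linear_op_sum[OF assms(1)] linear_opD(2)[OF assms(1)] word)
qed

lemma du_center_if_class_op_commutes:
  assumes "Z \<in> du_carrier \<alpha> \<beta>" "class_op Z = F" "linear_op F"
    and "\<And>g. F (act_x g) = act_x (F g)" and "\<And>g. F (act_y g) = act_y (F g)"
  shows "Z \<in> du_center \<alpha> \<beta>"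
  unfolding du_center_def
proof (intro CollectI conjI ballI assms(1))
  fix P assume P: "P \<in> du_carrier \<alpha> \<beta>"
  have "class_op Z (class_op P g) = class_op P (class_op Z g)" for g
    unfolding class_op_def[of P] assms(2) by (rule poly_op_commute[OF assms(3-5)])
  then show "du_mult \<alpha> \<beta> Z P = du_mult \<alpha> \<beta> P Z"
    using assms(1) P by (intro du_carrier_eqI du_mult_in_carrier) (simp_all add: class_op_du_mult)
qed

lemma act_x_funpow: "(act_x ^^ n) g k = (sigma ^^ n) (g (k - int n))"
  by (induction n arbitrary: k) (simp_all add: act_x_def algebra_simps)

lemma act_y_funpow: "(act_y ^^ n) g k = nf_value n 0 * (sigma_inv ^^ n) (g (k + int n))"
  by (induction n arbitrary: k) (simp_all add: act_y_def nf_value_def algebra_simps)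

lemma sigma_funpow_sigma_inv: "(sigma ^^ n) (sigma_inv x) = sigma_inv ((sigma ^^ n) x)"
  by (induction n arbitrary: x) simp_all

lemma sigma_inv_funpow_sigma: "(sigma_inv ^^ n) (sigma x) = sigma ((sigma_inv ^^ n) x)"
  by (induction n arbitrary: x) simp_all

lemma sigma_inv_funpow_sigma_funpow [simp]: "(sigma_inv ^^ n) ((sigma ^^ n) x) = x"
  by (induction n arbitrary: x) (simp_all add: sigma_inv_funpow_sigma funpow_swap1)

lemma nf_value_Suc_0: "nf_value (Suc m) 0 = nf_value m 0 * (sigma_inv ^^ m) var_v"
proof (induction m)
  case (Suc m)
  then show ?case by (simp add: nf_value_Suc mult.assoc)
qed (simp add: nf_value_Suc nf_value_def)

lemma sigma_nf_value_period:
  assumes "N \<ge> 1" "(sigma ^^ N) var_v = var_v"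
  shows "sigma (nf_value N 0) = nf_value N 0"
proof -
  obtain m where m: "N = Suc m" using assms(1) by (cases N) auto
  have "(sigma ^^ m) var_u = var_v" using assms(2) by (simp add: m funpow_Suc_right del: funpow.simps)
  then have "(sigma_inv ^^ m) var_v = var_u" by (metis sigma_inv_funpow_sigma_funpow)
  then have "nf_value N 0 = nf_value m 0 * var_u" by (simp add: m nf_value_Suc_0)
  moreover have "sigma (nf_value N 0) = var_u * nf_value m 0" by (simp add: m nf_value_Suc)
  ultimately show ?thesis by (simp add: mult.commute)
qed

lemma du_pow_x_central:
  assumes "N \<ge> 1" "(sigma ^^ N) var_v = var_v"
  shows "du_pow \<alpha> \<beta> (du_x \<alpha> \<beta>) N \<in> du_center \<alpha> \<beta>"
proof (rule du_center_if_class_op_commutes)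
  show "du_pow \<alpha> \<beta> (du_x \<alpha> \<beta>) N \<in> du_carrier \<alpha> \<beta>" by (rule du_pow_in_carrier[OF du_x_in_carrier])
  show "class_op (du_pow \<alpha> \<beta> (du_x \<alpha> \<beta>) N) = act_x ^^ N"
    by (simp add: class_op_du_pow du_x_in_carrier)
  show "linear_op (act_x ^^ N)" by (intro linear_op_funpow linear_op_act_x)
  show "(act_x ^^ N) (act_x g) = act_x ((act_x ^^ N) g)" for g
    by (simp add: funpow_swap1)
  show "(act_x ^^ N) (act_y g) = act_y ((act_x ^^ N) g)" for g
    using assms(2)
    by (auto simp: fun_eq_iff act_x_funpow act_y_def sigma_funpow_sigma_inv algebra_simps
        comm_ring_hom.hom_mult[OF comm_ring_hom_funpow[OF sigma.comm_ring_hom_axioms]] simp del: funpow.simps)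
qed

lemma du_pow_y_central:
  assumes "N \<ge> 1" "(sigma ^^ N) var_v = var_v"
  shows "du_pow \<alpha> \<beta> (du_y \<alpha> \<beta>) N \<in> du_center \<alpha> \<beta>"
proof (rule du_center_if_class_op_commutes)
  show "du_pow \<alpha> \<beta> (du_y \<alpha> \<beta>) N \<in> du_carrier \<alpha> \<beta>" by (rule du_pow_in_carrier[OF du_y_in_carrier])
  show "class_op (du_pow \<alpha> \<beta> (du_y \<alpha> \<beta>) N) = act_y ^^ N"
    by (simp add: class_op_du_pow du_y_in_carrier)
  show "linear_op (act_y ^^ N)" by (intro linear_op_funpow linear_op_act_y)
  show "(act_y ^^ N) (act_y g) = act_y ((act_y ^^ N) g)" for g
    by (simp add: funpow_swap1)
  show "(act_y ^^ N) (act_x g) = act_x ((act_y ^^ N) g)" for g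
    using sigma_nf_value_period[OF assms]
    by (auto simp: fun_eq_iff act_y_funpow act_x_def sigma_inv_funpow_sigma algebra_simps simp del: funpow.simps)
qed

lemma seq_at_eq_iff [simp]: "seq_at m a = seq_at m b \<longleftrightarrow> a = b"
  by (auto simp: seq_at_def fun_eq_iff)

lemma class_op_funpow_seq_at:
  assumes "\<And>g k. class_op P g k = r * sigma_pow e (g (k - e))"
  shows "(class_op P ^^ n) (seq_at 0 1) = seq_at (int n * e) (((\<lambda>s. r * sigma_pow e s) ^^ n) 1)"
proof (induction n)
  case (Suc n)
  then show ?case
    by (auto simp: fun_eq_iff assms seq_at_def algebra_simps simp del: sigma_pow_eq_0_iff)
qed simp

lemma var_v_dvd_class_op:
  assumes "P \<in> du_carrier \<alpha> \<beta>"
  shows "var_v dvd class_op P (seq_at 0 1) (- 1)"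
proof -
  obtain q where q: "Poly_Mapping.keys q \<subseteq> nf_words" "du_rep P - q \<in> du_ideal \<alpha> \<beta>"
    using du_words_nf_reducible[OF du_rep_in_words[OF assms], of \<alpha> \<beta>] by (auto simp: nf_reducible_def)
  then have "class_op P = poly_op q" unfolding class_op_def by (intro ext poly_op_eq_if_du_ideal)
  then show ?thesis using var_v_dvd_poly_op_nf[OF q(1)] by simp
qed

lemma nf_value_0_0 [simp]: "nf_value 0 0 = 1"
  by (simp add: nf_value_def)

lemma nf_value_nonzero: "nf_value n j \<noteq> 0"
  by (induction n) (simp_all add: nf_value_0 nf_value_Suc)

lemma Oz_fixes_central_power:
  assumes "\<phi> \<in> du_Oz \<alpha> \<beta>" "P \<in> du_carrier \<alpha> \<beta>" "du_pow \<alpha> \<beta> P N \<in> du_center \<alpha> \<beta>"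
  shows "class_op (\<phi> P) ^^ N = class_op P ^^ N"
proof -
  have aut: "du_is_aut \<alpha> \<beta> \<phi>" using assms(1) by (simp add: du_Oz_def)
  have "\<phi> (du_pow \<alpha> \<beta> P N) = du_pow \<alpha> \<beta> P N"
    using assms(1,3) by (simp add: du_Oz_def)
  then have "du_pow \<alpha> \<beta> (\<phi> P) N = du_pow \<alpha> \<beta> P N"
    by (simp add: du_is_aut_pow[OF aut assms(2)])
  then show ?thesis
    by (metis class_op_du_pow du_is_aut_in_carrier[OF aut assms(2)] assms(2))
qed

lemma Oz_x_scalar:
  assumes \<phi>: "\<phi> \<in> du_Oz \<alpha> \<beta>" and N: "N \<ge> 1" "(sigma ^^ N) var_v = var_v"
  obtains c where "\<phi> (du_x \<alpha> \<beta>) = du_smul \<alpha> \<beta> c (du_x \<alpha> \<beta>)"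
proof -
  define P where "P = \<phi> (du_x \<alpha> \<beta>)"
  have P: "P \<in> du_carrier \<alpha> \<beta>"
    using \<phi> du_x_in_carrier unfolding P_def du_Oz_def by (blast intro: du_is_aut_in_carrier)
  have "class_op P ^^ N = act_x ^^ N"
    using Oz_fixes_central_power[OF \<phi> du_x_in_carrier du_pow_x_central[OF N]] by (simp add: P_def)
  then have pow: "(class_op P ^^ N) (seq_at 0 1) = seq_at (int N * 1) 1"
    by (simp add: fun_eq_iff act_x_funpow seq_at_def comm_ring_hom.hom_zero comm_ring_hom.hom_one
        comm_ring_hom_funpow[OF sigma.comm_ring_hom_axioms] del: funpow.simps)
  obtain r where r: "\<And>g k. class_op P g k = r * sigma_pow 1 (g (k - 1))"
    using class_op_homogeneous[OF N(1) pow one_neq_zero] by blast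
  have "((\<lambda>s. r * sigma s) ^^ N) 1 = 1"
    using class_op_funpow_seq_at[of P r 1 N, OF r] pow by (simp add: sigma_pow_1)
  moreover obtain m where "N = Suc m" using N by (cases N) auto
  ultimately obtain c where c: "r = const_uv c" by (auto elim: const_uv_of_unit)
  have "P = du_smul \<alpha> \<beta> c (du_x \<alpha> \<beta>)"
    using P du_x_in_carrier
    by (intro du_carrier_eqI du_smul_in_carrier)
      (simp_all add: fun_eq_iff r c class_op_du_smul[OF du_x_in_carrier] act_x_def sigma_pow_1)
  then show ?thesis using that by (simp add: P_def)
qed

lemma Oz_y_scalar:
  assumes \<phi>: "\<phi> \<in> du_Oz \<alpha> \<beta>" and N: "N \<ge> 1" "(sigma ^^ N) var_v = var_v"
  obtains c where "\<phi> (du_y \<alpha> \<beta>) = du_smul \<alpha> \<beta> c (du_y \<alpha> \<beta>)"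
proof -
  define P where "P = \<phi> (du_y \<alpha> \<beta>)"
  have P: "P \<in> du_carrier \<alpha> \<beta>"
    using \<phi> du_y_in_carrier unfolding P_def du_Oz_def by (blast intro: du_is_aut_in_carrier)
  have "class_op P ^^ N = act_y ^^ N"
    using Oz_fixes_central_power[OF \<phi> du_y_in_carrier du_pow_y_central[OF N]] by (simp add: P_def)
  then have pow: "(class_op P ^^ N) (seq_at 0 1) = seq_at (int N * - 1) (nf_value N 0)"
    by (simp add: fun_eq_iff act_y_funpow seq_at_def comm_ring_hom.hom_zero comm_ring_hom.hom_one
        comm_ring_hom_funpow[OF sigma_inv.comm_ring_hom_axioms] del: funpow.simps)
  obtain r where r: "\<And>g k. class_op P g k = r * sigma_pow (- 1) (g (k - - 1))"
    using class_op_homogeneous[OF N(1) pow nf_value_nonzero] by blast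
  have "var_v dvd r" using var_v_dvd_class_op[OF P] by (simp add: r seq_at_def sigma_pow_minus_1)
  then obtain s where s: "r = var_v * s" by (rule dvdE)
  have factor: "((\<lambda>t. r * sigma_inv t) ^^ n) 1 = nf_value n 0 * ((\<lambda>t. s * sigma_inv t) ^^ n) 1" for n
    by (induction n) (simp_all add: s nf_value_Suc algebra_simps)
  have "nf_value N 0 * ((\<lambda>t. s * sigma_inv t) ^^ N) 1 = nf_value N 0 * 1"
    using class_op_funpow_seq_at[of P r "- 1" N, OF r] pow by (simp add: sigma_pow_minus_1 factor)
  then have "((\<lambda>t. s * sigma_inv t) ^^ N) 1 = 1" using nf_value_nonzero by simp
  moreover obtain m where "N = Suc m" using N by (cases N) auto
  ultimately obtain c where c: "s = const_uv c" by (auto elim: const_uv_of_unit)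
  have "P = du_smul \<alpha> \<beta> c (du_y \<alpha> \<beta>)"
    using P du_y_in_carrier
    by (intro du_carrier_eqI du_smul_in_carrier)
      (simp_all add: fun_eq_iff r s c class_op_du_smul[OF du_y_in_carrier] act_y_def sigma_pow_minus_1
        algebra_simps)
  then show ?thesis using that by (simp add: P_def)
qed

end


section \<open>\<open>Oz(A)\<close> is commutative\<close>

definition du_is_endo :: "'k::comm_ring_1 \<Rightarrow> 'k \<Rightarrow> ('k ncpoly set \<Rightarrow> 'k ncpoly set) \<Rightarrow> bool" where
  "du_is_endo \<alpha> \<beta> F \<longleftrightarrow>
     (\<forall>P\<in>du_carrier \<alpha> \<beta>. F P \<in> du_carrier \<alpha> \<beta>)
   \<and> (\<forall>P\<in>du_carrier \<alpha> \<beta>. \<forall>Q\<in>du_carrier \<alpha> \<beta>.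
        F (du_add \<alpha> \<beta> P Q) = du_add \<alpha> \<beta> (F P) (F Q)
      \<and> F (du_mult \<alpha> \<beta> P Q) = du_mult \<alpha> \<beta> (F P) (F Q))
   \<and> (\<forall>c. \<forall>P\<in>du_carrier \<alpha> \<beta>. F (du_smul \<alpha> \<beta> c P) = du_smul \<alpha> \<beta> c (F P))
   \<and> F (du_one \<alpha> \<beta>) = du_one \<alpha> \<beta>"

lemma du_is_aut_imp_endo: "du_is_aut \<alpha> \<beta> \<phi> \<Longrightarrow> du_is_endo \<alpha> \<beta> \<phi>"
  by (auto simp: du_is_aut_def du_is_endo_def bij_betw_def)

lemma du_is_endo_comp: "du_is_endo \<alpha> \<beta> F \<Longrightarrow> du_is_endo \<alpha> \<beta> G \<Longrightarrow> du_is_endo \<alpha> \<beta> (\<lambda>P. F (G P))"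
  by (simp add: du_is_endo_def)

context down_up
begin

lemma du_class_add:
  "p \<in> du_words \<Longrightarrow> q \<in> du_words \<Longrightarrow>
     du_class \<alpha> \<beta> (p + q) = du_add \<alpha> \<beta> (du_class \<alpha> \<beta> p) (du_class \<alpha> \<beta> q)"
  by (intro du_carrier_eqI)
    (simp_all add: du_class_in_carrier du_words_add du_add_in_carrier class_op_du_add class_op_class
      poly_op_add fun_eq_iff)

lemma du_class_nc_mult:
  "p \<in> du_words \<Longrightarrow> q \<in> du_words \<Longrightarrow>
     du_class \<alpha> \<beta> (nc_mult p q) = du_mult \<alpha> \<beta> (du_class \<alpha> \<beta> p) (du_class \<alpha> \<beta> q)"
  by (intro du_carrier_eqI)
    (simp_all add: du_class_in_carrier du_words_mult du_mult_in_carrier class_op_du_mult class_op_class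
      poly_op_nc_mult)

lemma du_class_single_Nil: "du_class \<alpha> \<beta> (Poly_Mapping.single [] c) = du_smul \<alpha> \<beta> c (du_one \<alpha> \<beta>)"
  by (intro du_carrier_eqI)
    (simp_all add: du_class_in_carrier du_words_single du_smul_in_carrier du_one_in_carrier
      class_op_du_smul class_op_class poly_op_single fun_eq_iff)

lemma du_class_zero: "du_class \<alpha> \<beta> 0 = du_smul \<alpha> \<beta> 0 (du_one \<alpha> \<beta>)"
  using du_class_single_Nil[of 0] by simp

lemma du_class_single_Cons:
  assumes "set (a # w) \<subseteq> {0, 1}"
  shows "du_class \<alpha> \<beta> (Poly_Mapping.single (a # w) c)
           = du_mult \<alpha> \<beta> (if a = 0 then du_x \<alpha> \<beta> else du_y \<alpha> \<beta>) (du_class \<alpha> \<beta> (Poly_Mapping.single w c))"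
proof -
  have "Poly_Mapping.single (a # w) c = nc_mult (nc_var a) (Poly_Mapping.single w c)"
    by (simp add: nc_var_def nc_mult_single)
  then have "du_class \<alpha> \<beta> (Poly_Mapping.single (a # w) c)
               = du_mult \<alpha> \<beta> (du_class \<alpha> \<beta> (nc_var a)) (du_class \<alpha> \<beta> (Poly_Mapping.single w c))"
  proof -
    have "nc_var a \<in> du_words" "Poly_Mapping.single w c \<in> du_words"
      using assms by (auto simp: du_words_def nc_var_def)
    from du_class_nc_mult[OF this] \<open>Poly_Mapping.single (a # w) c = _\<close> show ?thesis by simp
  qed
  moreover have "du_class \<alpha> \<beta> (nc_var a) = (if a = 0 then du_x \<alpha> \<beta> else du_y \<alpha> \<beta>)"
    using assms by (auto simp: du_x_def du_y_def)
  ultimately show ?thesis by simp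
qed

lemma du_is_endo_eqI:
  assumes F: "du_is_endo \<alpha> \<beta> F" and G: "du_is_endo \<alpha> \<beta> G"
    and x: "F (du_x \<alpha> \<beta>) = G (du_x \<alpha> \<beta>)" and y: "F (du_y \<alpha> \<beta>) = G (du_y \<alpha> \<beta>)"
    and P: "P \<in> du_carrier \<alpha> \<beta>"
  shows "F P = G P"
proof -
  note endo = F[unfolded du_is_endo_def] G[unfolded du_is_endo_def]
  have word: "F (du_class \<alpha> \<beta> (Poly_Mapping.single w c)) = G (du_class \<alpha> \<beta> (Poly_Mapping.single w c))"
    if "set w \<subseteq> {0, 1}" for w c
    using that
  proof (induction w)
    case Nil
    show ?case using endo du_one_in_carrier[of \<alpha> \<beta>] by (simp add: du_class_single_Nil)
  next
    case (Cons a w)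
    have "du_class \<alpha> \<beta> (Poly_Mapping.single w c) \<in> du_carrier \<alpha> \<beta>"
      using Cons.prems by (simp add: du_class_in_carrier du_words_single)
    then show ?case
      using Cons endo x y du_x_in_carrier[of \<alpha> \<beta>] du_y_in_carrier[of \<alpha> \<beta>]
      by (simp add: du_class_single_Cons)
  qed
  have "p \<in> du_words \<Longrightarrow> F (du_class \<alpha> \<beta> p) = G (du_class \<alpha> \<beta> p)" for p
  proof (induction rule: du_words_induct)
    case zero
    show ?case using endo du_one_in_carrier[of \<alpha> \<beta>] by (simp add: du_class_zero)
  next
    case (add p q)
    then show ?case using endo by (simp add: du_class_add du_class_in_carrier)
  qed (rule word)
  then show ?thesis using P by (metis du_carrierE)
qed


lemma du_smul_commute:
  "P \<in> du_carrier \<alpha> \<beta> \<Longrightarrow> du_smul \<alpha> \<beta> a (du_smul \<alpha> \<beta> b P) = du_smul \<alpha> \<beta> b (du_smul \<alpha> \<beta> a P)"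
  by (intro du_carrier_eqI) (simp_all add: du_smul_in_carrier class_op_du_smul fun_eq_iff algebra_simps)

lemma du_is_endo_diagonal_commute:
  assumes F: "du_is_endo \<alpha> \<beta> F" and G: "du_is_endo \<alpha> \<beta> G"
    and x: "F (du_x \<alpha> \<beta>) = du_smul \<alpha> \<beta> a (du_x \<alpha> \<beta>)" "G (du_x \<alpha> \<beta>) = du_smul \<alpha> \<beta> a' (du_x \<alpha> \<beta>)"
    and y: "F (du_y \<alpha> \<beta>) = du_smul \<alpha> \<beta> b (du_y \<alpha> \<beta>)" "G (du_y \<alpha> \<beta>) = du_smul \<alpha> \<beta> b' (du_y \<alpha> \<beta>)"
    and P: "P \<in> du_carrier \<alpha> \<beta>"
  shows "F (G P) = G (F P)"
proof (rule du_is_endo_eqI[OF du_is_endo_comp[OF F G] du_is_endo_comp[OF G F] _ _ P])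
  note smul = F[unfolded du_is_endo_def] G[unfolded du_is_endo_def]
  show "F (G (du_x \<alpha> \<beta>)) = G (F (du_x \<alpha> \<beta>))"
    using x smul du_x_in_carrier[of \<alpha> \<beta>] by (simp add: du_smul_commute)
  show "F (G (du_y \<alpha> \<beta>)) = G (F (du_y \<alpha> \<beta>))"
    using y smul du_y_in_carrier[of \<alpha> \<beta>] by (simp add: du_smul_commute)
qed

end


section \<open>A polynomial identity forces \<open>\<sigma>\<close> to have finite order\<close>

lemma characters_linearly_independent:
  fixes \<chi> :: "'i \<Rightarrow> 'm \<Rightarrow> 'b::idom"
  assumes "finite S" "e \<in> M" "\<And>m m'. m \<in> M \<Longrightarrow> m' \<in> M \<Longrightarrow> mul m m' \<in> M"
    and "\<And>i. i \<in> S \<Longrightarrow> \<chi> i e = 1"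
    and "\<And>i m m'. i \<in> S \<Longrightarrow> m \<in> M \<Longrightarrow> m' \<in> M \<Longrightarrow> \<chi> i (mul m m') = \<chi> i m * \<chi> i m'"
    and "\<And>i j. i \<in> S \<Longrightarrow> j \<in> S \<Longrightarrow> i \<noteq> j \<Longrightarrow> \<exists>m\<in>M. \<chi> i m \<noteq> \<chi> j m"
    and "\<And>m. m \<in> M \<Longrightarrow> (\<Sum>i\<in>S. c i * \<chi> i m) = 0"
    and "i \<in> S"
  shows "c i = 0"
  using assms
proof (induction "card S" arbitrary: S c rule: less_induct)
  case less
  show ?case
  proof (cases "S = {i}")
    case True
    then show ?thesis using less.prems(2,4,7) by force
  next
    case False
    then obtain j where j: "j \<in> S" "j \<noteq> i" using less.prems(8) by blast
    then obtain m0 where m0: "m0 \<in> M" "\<chi> i m0 \<noteq> \<chi> j m0" using less.prems(6,8) by metis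
    define c' where "c' k = c k * (\<chi> k m0 - \<chi> j m0)" for k
    have "(\<Sum>k\<in>S - {j}. c' k * \<chi> k m) = 0" if m: "m \<in> M" for m
    proof -
      have "(\<Sum>k\<in>S - {j}. c' k * \<chi> k m) = (\<Sum>k\<in>S. c k * (\<chi> k m0 - \<chi> j m0) * \<chi> k m)"
        unfolding c'_def using less.prems(1) j by (intro sum.mono_neutral_left) auto
      also have "\<dots> = (\<Sum>k\<in>S. c k * \<chi> k (mul m0 m)) - \<chi> j m0 * (\<Sum>k\<in>S. c k * \<chi> k m)"
        using less.prems(5) m0 m by (simp add: sum_distrib_left sum_subtractf algebra_simps)
      also have "\<dots> = 0" using less.prems(3,7) m0 m by simp
      finally show ?thesis .
    qed
    then have "c' i = 0"
      using less.prems j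
      by (intro less.hyps[of "S - {j}" c', OF card_Diff1_less[OF less.prems(1) j(1)]]) auto
    then show ?thesis using m0 by (simp add: c'_def)
  qed
qed

context down_up
begin

lemma sigma_funpow_var_v_linear: "\<exists>p q. (sigma ^^ t) var_v = lin_uv p q"
proof (induction t)
  case 0
  show ?case using lin_uv_0_1 by (metis funpow_0)
next
  case (Suc t)
  then obtain p q where "(sigma ^^ t) var_v = lin_uv p q" by blast
  then show ?case by (intro exI[of _ "p * \<alpha> + q"] exI[of _ "p * \<beta>"]) (simp add: sigma_lin_uv)
qed

lemma sigma_funpow_var_v_inj:
  assumes "\<forall>N\<ge>1. (sigma ^^ N) var_v \<noteq> var_v"
  shows "inj (\<lambda>t. (sigma ^^ t) var_v)"
proof -
  have neq: "(sigma ^^ a) var_v \<noteq> (sigma ^^ (a + d)) var_v" if "d \<ge> 1" for a d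
  proof
    assume "(sigma ^^ a) var_v = (sigma ^^ (a + d)) var_v"
    then have "(sigma_inv ^^ a) ((sigma ^^ a) var_v) = (sigma_inv ^^ a) ((sigma ^^ a) ((sigma ^^ d) var_v))"
      by (simp add: funpow_add)
    then have "(sigma ^^ d) var_v = var_v" by simp
    then show False using assms that by simp
  qed
  show ?thesis
  proof (rule injI)
    fix a b assume eq: "(sigma ^^ a) var_v = (sigma ^^ b) var_v"
    show "a = b"
    proof (rule ccontr)
      assume "a \<noteq> b"
      then consider "b = a + (b - a)" "b - a \<ge> 1" | "a = b + (a - b)" "a - b \<ge> 1" by linarith
      then show False using neq eq by cases metis+
    qed
  qed
qed

lemma separating_hom:
  assumes "(p0, q0) \<noteq> (0, 0)"
  obtains \<pi> :: "'k poly poly \<Rightarrow> 'k poly"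
  where "comm_ring_hom \<pi>" "\<And>p q. \<pi> (1 + lin_uv p q) = 0 \<longleftrightarrow> p = p0 \<and> q = q0"
proof -
  have eval: "subst_bipoly (\<lambda>c. [:c:]) A B (1 + lin_uv p q) = 1 + [:p:] * A + [:q:] * B" for A B p q
    using comm_ring_hom_subst_bipoly[OF comm_ring_hom_const_poly, of A B]
    by (simp add: comm_ring_hom.hom_add comm_ring_hom.hom_one subst_bipoly_lin_uv[OF comm_ring_hom_const_poly])
  show ?thesis
  proof (cases "q0 = 0")
    case False
    show ?thesis
    proof (rule that[OF comm_ring_hom_subst_bipoly[OF comm_ring_hom_const_poly, of "[:0, 1:]" "[:- 1 / q0, - p0 / q0:]"]])
      show "subst_bipoly (\<lambda>c. [:c:]) [:0, 1:] [:- 1 / q0, - p0 / q0:] (1 + lin_uv p q) = 0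
              \<longleftrightarrow> p = p0 \<and> q = q0" for p q
        unfolding eval using False by (simp add: one_pCons field_simps) (auto simp: field_simps)
    qed
  next
    case True
    with assms have "p0 \<noteq> 0" by simp
    show ?thesis
    proof (rule that[OF comm_ring_hom_subst_bipoly[OF comm_ring_hom_const_poly, of "[:- 1 / p0:]" "[:0, 1:]"]])
      show "subst_bipoly (\<lambda>c. [:c:]) [:- 1 / p0:] [:0, 1:] (1 + lin_uv p q) = 0
              \<longleftrightarrow> p = p0 \<and> q = q0" for p q
        unfolding eval using True \<open>p0 \<noteq> 0\<close> by (simp add: one_pCons field_simps) (auto simp: field_simps)
    qed
  qed
qed


primrec word_char :: "nat list \<Rightarrow> (nat \<Rightarrow> 'k poly poly) \<Rightarrow> 'k poly poly" where
  "word_char [] g = 1"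
| "word_char (i # w) g = g i * sigma (word_char w g)"

lemma word_char_eq_prod: "word_char w g = (\<Prod>t<length w. (sigma ^^ t) (g (w ! t)))"
proof (induction w)
  case (Cons i w)
  then show ?case
    by (simp add: prod.lessThan_Suc_shift funpow_swap1 del: prod.lessThan_Suc)
qed simp

lemma word_char_mult: "word_char w (\<lambda>i. g i * h i) = word_char w g * word_char w h"
  by (induction w) (simp_all add: algebra_simps)

lemma word_char_one: "word_char w (\<lambda>i. 1) = 1"
  by (induction w) simp_all

text \<open>The image of \<open>word_char w g\<close> under a homomorphism killing \<open>1 + \<sigma>\<^sup>t\<^sup>0 v\<close> vanishes, that of
  \<open>word_char w' g\<close> does not.\<close>

lemma word_char_separates:
  assumes inj: "inj (\<lambda>t. (sigma ^^ t) var_v)" and len: "length w' = length w"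
    and t0: "t0 < length w" "w' ! t0 \<noteq> w ! t0"
  defines "g \<equiv> \<lambda>j. if j = w ! t0 then 1 + var_v else 1"
  shows "word_char w g \<noteq> word_char w' g"
proof -
  obtain p0 q0 where pq0: "(sigma ^^ t0) var_v = lin_uv p0 q0"
    using sigma_funpow_var_v_linear by blast
  have "(p0, q0) \<noteq> (0, 0)"
    using pq0 by (auto simp: lin_uv_def)
  then obtain \<pi> :: "'k poly poly \<Rightarrow> 'k poly" where \<pi>: "comm_ring_hom \<pi>"
    and kills: "\<And>p q. \<pi> (1 + lin_uv p q) = 0 \<longleftrightarrow> p = p0 \<and> q = q0"
    using separating_hom by blast
  have kills_iff: "\<pi> (1 + (sigma ^^ t) var_v) = 0 \<longleftrightarrow> t = t0" for t
  proof -
    obtain p q where pq: "(sigma ^^ t) var_v = lin_uv p q" using sigma_funpow_var_v_linear by blast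
    have "\<pi> (1 + (sigma ^^ t) var_v) = 0 \<longleftrightarrow> (sigma ^^ t) var_v = (sigma ^^ t0) var_v"
      by (simp add: pq pq0 kills lin_uv_eq_iff)
    also have "\<dots> \<longleftrightarrow> t = t0" using inj by (auto dest: injD)
    finally show ?thesis .
  qed
  have factor: "(sigma ^^ t) (g j) = (if j = w ! t0 then 1 + (sigma ^^ t) var_v else 1)" for t j
    using comm_ring_hom_funpow[OF sigma.comm_ring_hom_axioms, of t]
    by (simp add: g_def comm_ring_hom.hom_add comm_ring_hom.hom_one)
  have "\<pi> (word_char w g) = (\<Prod>t<length w. \<pi> ((sigma ^^ t) (g (w ! t))))"
    by (simp add: word_char_eq_prod comm_ring_hom.hom_prod[OF \<pi>])
  also have "\<dots> = 0"
    using t0 by (intro prod_zero bexI[of _ t0]) (simp_all add: factor kills_iff)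
  finally have "\<pi> (word_char w g) = 0" .
  moreover have "\<pi> (word_char w' g) = (\<Prod>t<length w. \<pi> ((sigma ^^ t) (g (w' ! t))))"
    by (simp add: word_char_eq_prod comm_ring_hom.hom_prod[OF \<pi>] len)
  moreover have "\<pi> ((sigma ^^ t) (g (w' ! t))) \<noteq> 0" for t
    using t0(2) by (auto simp: factor kills_iff comm_ring_hom.hom_one[OF \<pi>])
  ultimately show ?thesis by (auto simp: prod_zero_iff)
qed

definition realized_multipliers :: "'k poly poly set" where
  "realized_multipliers = {r. \<exists>t\<in>du_words. poly_op t = (\<lambda>h k. r * h k)}"

lemma realized_multipliers_one: "1 \<in> realized_multipliers"
  unfolding realized_multipliers_def using du_words_nc_one by (auto intro!: bexI[of _ nc_one])

lemma realized_multipliers_mult: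
  assumes "r \<in> realized_multipliers" "r' \<in> realized_multipliers"
  shows "r * r' \<in> realized_multipliers"
proof -
  obtain t t' where t: "t \<in> du_words" "poly_op t = (\<lambda>h k. r * h k)"
    and t': "t' \<in> du_words" "poly_op t' = (\<lambda>h k. r' * h k)"
    using assms by (auto simp: realized_multipliers_def)
  have "poly_op (nc_mult t t') = (\<lambda>h k. (r * r') * h k)"
    by (simp add: fun_eq_iff poly_op_nc_mult t t' algebra_simps)
  then show ?thesis unfolding realized_multipliers_def using du_words_mult[OF t(1) t'(1)] by blast
qed

text \<open>\<open>1 + yx\<close> acts as multiplication by \<open>1 + v\<close>.\<close>

lemma realized_multipliers_one_plus_v: "1 + var_v \<in> realized_multipliers"
proof -
  let ?t = "nc_one + Poly_Mapping.single [1, 0] 1"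
  have "?t \<in> du_words" by (intro du_words_add du_words_nc_one du_words_single) auto
  moreover have "poly_op ?t = (\<lambda>h k. (1 + var_v) * h k)"
    by (simp add: fun_eq_iff poly_op_add poly_op_single act_x_def act_y_def algebra_simps)
  ultimately show ?thesis unfolding realized_multipliers_def by blast
qed

lemma poly_op_subst_word:
  assumes "\<And>i. poly_op (t i) = (\<lambda>h k. g i * h k)"
  shows "poly_op (foldr (\<lambda>i acc. nc_mult (nc_mult (t i) (nc_var 0)) acc) w nc_one) (seq_at 0 1)
           = seq_at (int (length w)) (word_char w g)"
proof (induction w)
  case (Cons i w)
  then show ?case
    by (auto simp: fun_eq_iff poly_op_nc_mult poly_op_nc_var assms act_x_def seq_at_def)
qed simp

lemma PI_word_char_relation:
  assumes f: "\<And>s. (\<forall>i. s i \<in> du_words) \<Longrightarrow> nc_subst s f \<in> du_ideal \<alpha> \<beta>"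
    and g: "\<And>i. g i \<in> realized_multipliers"
  shows "(\<Sum>w\<in>{w\<in>Poly_Mapping.keys f. length w = L}. const_uv (Poly_Mapping.lookup f w) * word_char w g) = 0"
proof -
  have "\<exists>t. t \<in> du_words \<and> poly_op t = (\<lambda>h k. g i * h k)" for i
    using g by (auto simp: realized_multipliers_def)
  then obtain t where t: "\<And>i. t i \<in> du_words" "\<And>i. poly_op (t i) = (\<lambda>h k. g i * h k)"
    by metis
  define s where "s i = nc_mult (t i) (nc_var 0)" for i
  have "\<forall>i. s i \<in> du_words" by (simp add: s_def du_words_mult du_words_var t(1))
  then have "poly_op (nc_subst s f) (seq_at 0 1) (int L) = 0"
    using f poly_op_du_ideal by metis
  moreover have "poly_op (nc_subst s f) (seq_at 0 1) (int L)
      = (\<Sum>w\<in>Poly_Mapping.keys f. const_uv (Poly_Mapping.lookup f w) * seq_at (int (length w)) (word_char w g) (int L))"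
    by (simp add: nc_subst_def poly_op_sum poly_op_nc_smul s_def poly_op_subst_word[OF t(2)])
  moreover have "\<dots> = (\<Sum>w\<in>{w\<in>Poly_Mapping.keys f. length w = L}. const_uv (Poly_Mapping.lookup f w) * word_char w g)"
    by (simp add: seq_at_def sum.inter_filter if_distrib eq_commute[of L] cong: if_cong)
  ultimately show ?thesis by simp
qed

lemma PI_imp_sigma_period:
  assumes "du_PI \<alpha> \<beta>"
  obtains N where "N \<ge> 1" "(sigma ^^ N) var_v = var_v"
proof (rule ccontr)
  assume "\<not> thesis"
  then have "inj (\<lambda>t. (sigma ^^ t) var_v)" using that sigma_funpow_var_v_inj by blast
  obtain f :: "'k ncpoly" where f: "f \<noteq> 0" "\<And>s. (\<forall>i. s i \<in> du_words) \<Longrightarrow> nc_subst s f \<in> du_ideal \<alpha> \<beta>"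
    using assms by (auto simp: du_PI_def)
  obtain w0 where w0: "w0 \<in> Poly_Mapping.keys f" using f(1) by fastforce
  define S where "S = {w\<in>Poly_Mapping.keys f. length w = length w0}"
  define M where "M = {g :: nat \<Rightarrow> 'k poly poly. \<forall>i. g i \<in> realized_multipliers}"
  have "const_uv (Poly_Mapping.lookup f w0) = 0"
  proof (rule characters_linearly_independent[where \<chi> = word_char and M = M and e = "\<lambda>i. 1"
        and mul = "\<lambda>g h i. g i * h i" and S = S])
    show "\<exists>g\<in>M. word_char w g \<noteq> word_char w' g" if ww: "w \<in> S" "w' \<in> S" "w \<noteq> w'" for w w'
    proof -
      have len: "length w' = length w" using ww by (simp add: S_def)
      then obtain t0 where "t0 < length w" "w' ! t0 \<noteq> w ! t0"
        using ww(3) nth_equalityI by metis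
      then show ?thesis
        using word_char_separates[OF \<open>inj _\<close> len] realized_multipliers_one
          realized_multipliers_one_plus_v
        by (intro bexI) (auto simp: M_def)
    qed
  qed (use w0 PI_word_char_relation[OF f(2)] in \<open>auto simp: S_def M_def realized_multipliers_one
         realized_multipliers_mult word_char_mult word_char_one\<close>)
  then show False using w0 by (simp add: in_keys_iff)
qed

end


theorem corollary4p7:
  fixes \<alpha> \<beta> :: "'k::field_char_0"
  assumes "\<beta> \<noteq> 0"
    and "du_noetherian \<alpha> \<beta>"
    and "du_PI \<alpha> \<beta>"
  shows "(\<forall>\<phi>\<in>du_Oz \<alpha> \<beta>.
            (\<exists>c. \<phi> (du_x \<alpha> \<beta>) = du_smul \<alpha> \<beta> c (du_x \<alpha> \<beta>))
          \<and> (\<exists>c. \<phi> (du_y \<alpha> \<beta>) = du_smul \<alpha> \<beta> c (du_y \<alpha> \<beta>)))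
       \<and> (\<forall>\<phi>\<in>du_Oz \<alpha> \<beta>. \<forall>\<psi>\<in>du_Oz \<alpha> \<beta>. \<forall>P\<in>du_carrier \<alpha> \<beta>. \<phi> (\<psi> P) = \<psi> (\<phi> P))"
proof -
  interpret down_up \<alpha> \<beta> using assms(1) by unfold_locales
  obtain N where N: "N \<ge> 1" "(sigma ^^ N) var_v = var_v"
    using PI_imp_sigma_period[OF assms(3)] by blast
  have diagonal: "(\<exists>a. \<phi> (du_x \<alpha> \<beta>) = du_smul \<alpha> \<beta> a (du_x \<alpha> \<beta>))
      \<and> (\<exists>b. \<phi> (du_y \<alpha> \<beta>) = du_smul \<alpha> \<beta> b (du_y \<alpha> \<beta>))" if "\<phi> \<in> du_Oz \<alpha> \<beta>" for \<phi>
    using Oz_x_scalar[OF that N] Oz_y_scalar[OF that N] by metis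
  moreover have "\<phi> (\<psi> P) = \<psi> (\<phi> P)"
    if Oz: "\<phi> \<in> du_Oz \<alpha> \<beta>" "\<psi> \<in> du_Oz \<alpha> \<beta>" and P: "P \<in> du_carrier \<alpha> \<beta>" for \<phi> \<psi> P
  proof -
    have "du_is_endo \<alpha> \<beta> \<phi>" "du_is_endo \<alpha> \<beta> \<psi>"
      using Oz by (simp_all add: du_Oz_def du_is_aut_imp_endo)
    with diagonal[OF Oz(1)] diagonal[OF Oz(2)] P show ?thesis
      by (metis du_is_endo_diagonal_commute)
  qed
  ultimately show ?thesis by blast
qed

end
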